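(* Let $V=\mathbb{C}^2$ and consider the Segre cone $X_3\subset V^{\otimes3}$ of rank one tensors. (1) Let $\mu=(2,1)$ and let $t\in S^{(2,1)}V\subset V^{\otimes3}$ be general. Then $t$ admits four critical binary tensors of rank one on $X_{(2,1)}$. The remaining two critical binary tensors of rank one for $t$ on $X_3$ are $x\otimes y\otimes z$ and $y\otimes x\otimes z$ for some $x,y,z\in V$. If $t$ is real, the common singular value of these two critical points on $X_3\setminus X_{(2,1)}$ is real. (2) Let $\mu=(3)$ and let $t\in S^3V\subset V^{\otimes3}$ be general. Then $t$ admits three critical binary tensors of rank one on $X_{(3)}$. The remaining three critical binary tensors of rank one for $t$ on $X_3$ are $x\otimes x\otimes y$, $x\otimes y\otimes x$ and $y\otimes x\otimes x$ for some $x,y\in V$. If $t$ is real, the common singular value of these three critical points on $X_3\setminus X_{(3)}$ is real.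
   Context: $V=\mathbb{C}^2$ carries the complex bilinear symmetric form $q(x,y)=x_0y_0+x_1y_1$, $q(x)=q(x,x)$, and $V^{\otimes3}$ the induced form $\widetilde q(v_1\otimes v_2\otimes v_3,w_1\otimes w_2\otimes w_3)=\prod q(v_i,w_i)$; real tensors are those with real coordinates. $S^{(2,1)}V=S^2V\otimes V$ is the subspace of $V^{\otimes3}$ of tensors symmetric in the first two factors, $S^3V$ the fully symmetric tensors; $X_{(2,1)}=\{x^2\otimes y\}$ and $X_{(3)}=\{x^3\}$ are the corresponding cones of partially symmetric / symmetric rank one tensors, contained in $X_3=\{x\otimes y\otimes z\}$. A critical binary tensor of rank one for $t$ on a cone $X$ is a nonzero smooth point $z\in X$ with $\widetilde q(t-z,y)=0$ for all $y\in T_zX$. Non-isotropic critical tensors for $t$ on $X_3$ are of the form $\sigma\,x_1\otimes x_2\otimes x_3$ with $q(x_i)=1$ and $\widetilde q(t,\ldots\otimes v\otimes\ldots)=\sigma q(x_i,v)$ (contracting $t$ with the $x_k$, $k\neq i$, and $v$ in slot $i$) for all $i$ and $v\in V$; $\sigma$ is the corresponding singular value. *)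

theory Defs
  imports "HOL-Analysis.Analysis"
begin

type_synonym vec = "complex^2"
type_synonym tens = "complex^2^2^2"

definition tp :: "vec \<Rightarrow> vec \<Rightarrow> vec \<Rightarrow> tens" where
  "tp x y z = (\<chi> i. \<chi> j. \<chi> k. x$i * y$j * z$k)"

definition q :: "vec \<Rightarrow> vec \<Rightarrow> complex" where
  "q x y = (\<Sum>i\<in>UNIV. x$i * y$i)"

definition qt :: "tens \<Rightarrow> tens \<Rightarrow> complex" where
  "qt s t = (\<Sum>i\<in>UNIV. \<Sum>j\<in>UNIV. \<Sum>k\<in>UNIV. s$i$j$k * t$i$j$k)"

definition S21 :: "tens set" where
  "S21 = {t. \<forall>i j k. t$i$j$k = t$j$i$k}"

definition S3 :: "tens set" where
  "S3 = {t. \<forall>i j k. t$i$j$k = t$j$i$k \<and> t$i$j$k = t$i$k$j}"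

definition X3 :: "tens set" where
  "X3 = {tp x y z | x y z. True}"

definition X21 :: "tens set" where
  "X21 = {tp x x y | x y. True}"

definition Xsym3 :: "tens set" where
  "Xsym3 = {tp x x x | x. True}"

text \<open>Tangent spaces of the cones (at nonzero points, which are exactly the
  smooth points): images of the differentials of the parametrisations.\<close>
definition tan3 :: "tens \<Rightarrow> tens set" where
  "tan3 z = {tp a y w + tp x b w + tp x y c | a b c x y w. z = tp x y w}"

definition tan21 :: "tens \<Rightarrow> tens set" where
  "tan21 z = {tp a x w + tp x a w + tp x x c | a c x w. z = tp x x w}"

definition tansym3 :: "tens \<Rightarrow> tens set" where
  "tansym3 z = {tp a x x + tp x a x + tp x x a | a x. z = tp x x x}"

definition crit :: "tens set \<Rightarrow> (tens \<Rightarrow> tens set) \<Rightarrow> tens \<Rightarrow> tens \<Rightarrow> bool" where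
  "crit X T t z \<longleftrightarrow> z \<in> X \<and> z \<noteq> 0 \<and> (\<forall>u\<in>T z. qt (t - z) u = 0)"

text \<open>singular value of a (non-isotropic) critical rank one tensor\<close>
definition singular_value :: "tens \<Rightarrow> tens \<Rightarrow> complex \<Rightarrow> bool" where
  "singular_value t z \<sigma> \<longleftrightarrow> (\<exists>x1 x2 x3.
      q x1 x1 = 1 \<and> q x2 x2 = 1 \<and> q x3 x3 = 1 \<and>
      z = tp (\<sigma> *s x1) x2 x3 \<and>
      (\<forall>v. qt t (tp v x2 x3) = \<sigma> * q x1 v) \<and>
      (\<forall>v. qt t (tp x1 v x3) = \<sigma> * q x2 v) \<and>
      (\<forall>v. qt t (tp x1 x2 v) = \<sigma> * q x3 v))"

definition real_tensor :: "tens \<Rightarrow> bool" where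
  "real_tensor t \<longleftrightarrow> (\<forall>i j k. Im (t$i$j$k) = 0)"

inductive poly_fun :: "(tens \<Rightarrow> complex) \<Rightarrow> bool" where
  pf_const: "poly_fun (\<lambda>t. c)"
| pf_coord: "poly_fun (\<lambda>t. t$i$j$k)"
| pf_add: "poly_fun p \<Longrightarrow> poly_fun r \<Longrightarrow> poly_fun (\<lambda>t. p t + r t)"
| pf_mult: "poly_fun p \<Longrightarrow> poly_fun r \<Longrightarrow> poly_fun (\<lambda>t. p t * r t)"

text \<open>P holds for a general element of the (irreducible) linear subspace S:
  it holds off the zero locus of a polynomial not vanishing identically on S\<close>
definition general :: "tens set \<Rightarrow> (tens \<Rightarrow> bool) \<Rightarrow> bool" where
  "general S P \<longleftrightarrow> (\<exists>p. poly_fun p \<and> (\<exists>t\<in>S. p t \<noteq> 0) \<and> (\<forall>t\<in>S. p t \<noteq> 0 \<longrightarrow> P t))"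

end

theory Submission
  imports Defs "HOL-Computational_Algebra.Fundamental_Theorem_Algebra"
begin

text \<open>
  For \<open>t \<in> S21\<close> write \<open>t(x, y, w) = x\<^sup>T M(w) y\<close>, where \<open>M\<close> is a pencil of symmetric
  \<open>2 \<times> 2\<close> matrices. A rank-one tensor \<open>x \<otimes> y \<otimes> w\<close> is critical iff \<open>M(w) y = q(y) q(w) x\<close>,
  \<open>M(w) x = q(x) q(w) y\<close> and \<open>t(x, y, \<cdot>) = q(x) q(y) w\<close>.

  If \<open>x, y\<close> are independent, the first two equations force \<open>tr M(w) = 0\<close>, so \<open>w\<close> spans the
  traceless direction \<open>w\<^sub>0\<close> of the pencil, \<open>y\<close> is a multiple of \<open>M\<^sub>0 x\<close> with \<open>M\<^sub>0 = M(w\<^sub>0)\<close>,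
  and \<open>x\<close> is a zero of the quadratic form \<open>h(x) = t(x, M\<^sub>0 x, \<tau>)\<close>, \<open>\<tau>\<close> the vector of slice traces.
  Since \<open>M\<^sub>0\<^sup>2 = - det M\<^sub>0\<close>, the zeros of \<open>h\<close> are \<open>x\<close> and \<open>M\<^sub>0 x\<close>, giving exactly the two critical
  points \<open>x \<otimes> y \<otimes> w\<^sub>0\<close> and \<open>y \<otimes> x \<otimes> w\<^sub>0\<close>; and \<open>q(x) q(y) q(w\<^sub>0) = - det M\<^sub>0 / q(\<tau>)\<close> is a
  quotient of sums of squares when \<open>t\<close> is real, so their common singular value is real.

  If \<open>x, y\<close> are dependent the critical point \<open>x \<otimes> x \<otimes> w\<close> lies on \<open>X21\<close>, and \<open>x\<close> is a zero of the
  quartic form \<open>det(x, M(t(x, x, \<cdot>)) x)\<close>, which has four simple zeros. For symmetric \<open>t\<close> the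
  critical equations are invariant under all permutations; this forces the pair to be
  \<open>x \<otimes> y \<otimes> x, y \<otimes> x \<otimes> x\<close> and makes \<open>x \<otimes> x \<otimes> y\<close> the only critical point on \<open>X21\<close> outside \<open>X(3)\<close>.

  Every nondegeneracy condition used is the nonvanishing of a polynomial in \<open>t\<close> (resultants and
  a discriminant), and their product is nonzero at an explicit symmetric integer tensor.
\<close>

section \<open>Rank-one tensors and the critical equations\<close>

lemma tp_nth [simp]: "tp x y w $ i $ j $ k = x$i * y$j * w$k"
  by (simp add: tp_def)

lemma q_2: "q x y = x$1 * y$1 + x$2 * y$2"
  by (simp add: q_def sum_2)

lemma q_commute: "q x y = q y x"
  by (simp add: q_2 mult.commute)

lemma q_smult [simp]: "q (c *s x) y = c * q x y" "q x (c *s y) = c * q x y"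
  by (simp_all add: q_2 algebra_simps)

lemma q_uminus [simp]: "q (- x) y = - q x y" "q x (- y) = - q x y"
  by (simp_all add: q_2)

lemma vec2_eq_iff: "(x::vec) = y \<longleftrightarrow> x$1 = y$1 \<and> x$2 = y$2"
  by (simp add: vec_eq_iff forall_2)

lemma vec2_eq_0_iff: "(x::vec) = 0 \<longleftrightarrow> x$1 = 0 \<and> x$2 = 0"
  by (simp add: vec2_eq_iff)

lemma tens_eq_iff: "(s::tens) = t \<longleftrightarrow> (\<forall>i j k. s$i$j$k = t$i$j$k)"
  by (simp add: vec_eq_iff)

lemma q_left_eq_0_iff: "(\<forall>a. q a v = 0) \<longleftrightarrow> v = 0"
proof
  assume "\<forall>a. q a v = 0"
  from this[rule_format, of "vector [1, 0]"] this[rule_format, of "vector [0, 1]"]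
  show "v = 0" by (simp add: q_2 vec2_eq_0_iff)
qed (simp add: q_def)

lemma q_sum3_eq_0_iff: "(\<forall>a b c. q a u + q b v + q c r = 0) \<longleftrightarrow> u = 0 \<and> v = 0 \<and> r = 0"
proof
  assume H: "\<forall>a b c. q a u + q b v + q c r = 0"
  have "\<forall>a. q a u = 0" "\<forall>b. q b v = 0" "\<forall>c. q c r = 0"
    using H[rule_format, of _ 0 0] H[rule_format, of 0 _ 0] H[rule_format, of 0 0]
    by (simp_all add: q_2)
  then show "u = 0 \<and> v = 0 \<and> r = 0" by (simp add: q_left_eq_0_iff)
qed (simp add: q_def)

lemma tp_eq_0_iff: "tp x y w = 0 \<longleftrightarrow> x = 0 \<or> y = 0 \<or> w = 0"
proof
  assume "tp x y w = 0"
  then have "x$i * y$j * w$k = 0" for i j k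
    by (metis tp_nth zero_index)
  then show "x = 0 \<or> y = 0 \<or> w = 0"
    by (metis mult_eq_0_iff vec_eq_iff zero_index)
qed (auto simp: tens_eq_iff)

lemma tp_smult_to_first: "tp x y (c *s w) = tp (c *s x) y w" "tp x (c *s y) w = tp (c *s x) y w"
  by (simp_all add: tens_eq_iff mult_ac)

lemma tp_eq_tp_imp_smult:
  assumes eq: "tp x' y' w' = tp x y w" and nz: "tp x y w \<noteq> 0"
  shows "\<exists>l m n. x' = l *s x \<and> y' = m *s y \<and> w' = n *s w"
proof -
  obtain i j k where ijk: "x$i \<noteq> 0" "y$j \<noteq> 0" "w$k \<noteq> 0"
    using nz by (auto simp: tp_eq_0_iff vec_eq_iff)
  have E: "x'$a * y'$b * w'$c = x$a * y$b * w$c" for a b c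
    using eq by (metis tp_nth)
  have "x'$i \<noteq> 0" "y'$j \<noteq> 0" "w'$k \<noteq> 0"
    using E[of i j k] ijk by auto
  then have "x' = ((y$j*w$k)/(y'$j*w'$k)) *s x" "y' = ((x$i*w$k)/(x'$i*w'$k)) *s y"
    "w' = ((x$i*y$j)/(x'$i*y'$j)) *s w"
    using E[of _ j k] E[of i _ k] E[of i j] by (auto simp: vec_eq_iff field_simps)
  then show ?thesis by blast
qed

definition det2 :: "vec \<Rightarrow> vec \<Rightarrow> complex" where
  "det2 x y = x$1 * y$2 - x$2 * y$1"

lemma det2_commute: "det2 y x = - det2 x y"
  by (simp add: det2_def)

lemma det2_smult [simp]: "det2 (c *s x) y = c * det2 x y" "det2 x (c *s y) = c * det2 x y"
  by (simp_all add: det2_def algebra_simps)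

lemma det2_neq_0_imp_neq_0: "det2 x y \<noteq> 0 \<Longrightarrow> x \<noteq> 0 \<and> y \<noteq> 0"
  by (auto simp: det2_def)

lemma det2_eq_0_imp_smult:
  assumes "det2 x y = 0" "y \<noteq> 0"
  shows "\<exists>c. x = c *s y"
proof (cases "y$1 = 0")
  case True
  then show ?thesis
    using assms by (intro exI[of _ "x$2 / y$2"]) (auto simp: det2_def vec2_eq_iff field_simps)
next
  case False
  then show ?thesis
    using assms by (intro exI[of _ "x$1 / y$1"]) (auto simp: det2_def vec2_eq_iff field_simps)
qed

definition contract23 :: "tens \<Rightarrow> vec \<Rightarrow> vec \<Rightarrow> vec" where
  "contract23 t y w = (\<chi> i. \<Sum>j\<in>UNIV. \<Sum>k\<in>UNIV. t$i$j$k * y$j * w$k)"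

definition contract13 :: "tens \<Rightarrow> vec \<Rightarrow> vec \<Rightarrow> vec" where
  "contract13 t x w = (\<chi> j. \<Sum>i\<in>UNIV. \<Sum>k\<in>UNIV. t$i$j$k * x$i * w$k)"

definition contract12 :: "tens \<Rightarrow> vec \<Rightarrow> vec \<Rightarrow> vec" where
  "contract12 t x y = (\<chi> k. \<Sum>i\<in>UNIV. \<Sum>j\<in>UNIV. t$i$j$k * x$i * y$j)"

lemma contract_nth:
  "contract23 t y w $ i = t$i$1$1*y$1*w$1 + t$i$1$2*y$1*w$2 + t$i$2$1*y$2*w$1 + t$i$2$2*y$2*w$2"
  "contract13 t x w $ j = t$1$j$1*x$1*w$1 + t$1$j$2*x$1*w$2 + t$2$j$1*x$2*w$1 + t$2$j$2*x$2*w$2"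
  "contract12 t x y $ k = t$1$1$k*x$1*y$1 + t$1$2$k*x$1*y$2 + t$2$1$k*x$2*y$1 + t$2$2$k*x$2*y$2"
  by (simp_all add: contract23_def contract13_def contract12_def sum_2 add_ac)

lemma contract_smult [simp]:
  "contract23 t (c *s y) w = c *s contract23 t y w" "contract23 t y (c *s w) = c *s contract23 t y w"
  "contract13 t (c *s x) w = c *s contract13 t x w" "contract13 t x (c *s w) = c *s contract13 t x w"
  "contract12 t (c *s x) y = c *s contract12 t x y" "contract12 t x (c *s y) = c *s contract12 t x y"
  by (simp_all add: vec2_eq_iff contract_nth algebra_simps)

lemma qt_tp_contract:
  "qt t (tp a b c) = q a (contract23 t b c)"
  "qt t (tp a b c) = q b (contract13 t a c)"
  "qt t (tp a b c) = q c (contract12 t a b)"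
  by (simp_all add: qt_def q_2 contract_nth sum_2 algebra_simps)

lemma qt_diff_tangent3:
  "qt (t - tp x y w) (tp a y w + tp x b w + tp x y c) =
     q a (contract23 t y w - (q y y * q w w) *s x) + q b (contract13 t x w - (q x x * q w w) *s y)
     + q c (contract12 t x y - (q x x * q y y) *s w)"
  by (simp add: qt_def q_2 contract_nth sum_2 algebra_simps)

definition crit_eqs :: "tens \<Rightarrow> vec \<Rightarrow> vec \<Rightarrow> vec \<Rightarrow> bool" where
  "crit_eqs t x y w \<longleftrightarrow>
     contract23 t y w = (q y y * q w w) *s x \<and>
     contract13 t x w = (q x x * q w w) *s y \<and>
     contract12 t x y = (q x x * q y y) *s w"

lemma tan3_tp:
  assumes "tp x y w \<noteq> 0"
  shows "tan3 (tp x y w) = {tp a y w + tp x b w + tp x y c | a b c. True}"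
proof (intro equalityI subsetI)
  fix u assume "u \<in> tan3 (tp x y w)"
  then obtain a b c x' y' w' where u: "u = tp a y' w' + tp x' b w' + tp x' y' c"
    and eq: "tp x y w = tp x' y' w'" by (auto simp: tan3_def)
  obtain l m n where "x' = l *s x" "y' = m *s y" "w' = n *s w"
    using tp_eq_tp_imp_smult[OF eq[symmetric] assms] by blast
  then have "u = tp ((m*n) *s a) y w + tp x ((l*n) *s b) w + tp x y ((l*m) *s c)"
    by (simp add: u tens_eq_iff mult_ac)
  then show "u \<in> {tp a y w + tp x b w + tp x y c | a b c. True}" by blast
qed (unfold tan3_def, blast)

lemma crit_X3_tp_iff: "crit X3 tan3 t (tp x y w) \<longleftrightarrow> tp x y w \<noteq> 0 \<and> crit_eqs t x y w"
proof (cases "tp x y w = 0")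
  case False
  have "(\<forall>u\<in>tan3 (tp x y w). qt (t - tp x y w) u = 0) \<longleftrightarrow>
        (\<forall>a b c. qt (t - tp x y w) (tp a y w + tp x b w + tp x y c) = 0)"
    unfolding tan3_tp[OF False] by blast
  also have "\<dots> \<longleftrightarrow> crit_eqs t x y w"
    unfolding qt_diff_tangent3 q_sum3_eq_0_iff crit_eqs_def by simp
  finally show ?thesis using False by (auto simp: crit_def X3_def)
qed (simp add: crit_def)

lemma vec2_smult_right_cancel: "a *s (w::vec) = b *s w \<Longrightarrow> w \<noteq> 0 \<Longrightarrow> a = b"
  by (auto simp: vec2_eq_iff)

lemma crit_eqs_smult_eq_1:
  assumes "crit_eqs t x y w" "crit_eqs t (c *s x) y w"
    and "q x x \<noteq> 0" "q y y \<noteq> 0" "w \<noteq> 0" "c \<noteq> 0"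
  shows "c = 1"
proof -
  have "(c * (q x x * q y y)) *s w = (c * c * (q x x * q y y)) *s w"
    using assms(1,2) by (simp add: crit_eqs_def mult_ac)
  then have "c * (q x x * q y y) = c * c * (q x x * q y y)"
    using assms(5) by (rule vec2_smult_right_cancel)
  then show "c = 1" using assms(3,4,6) by simp
qed

lemma S21_nth: "t \<in> S21 \<Longrightarrow> t$2$1$k = t$1$2$k"
  by (simp add: S21_def)

lemma S3_nth:
  assumes "t \<in> S3"
  shows "t$1$2$1 = t$1$1$2" "t$2$1$1 = t$1$1$2" "t$2$1$2 = t$1$2$2" "t$2$2$1 = t$1$2$2"
proof -
  have A: "t$i$j$k = t$j$i$k" and B: "t$i$j$k = t$i$k$j" for i j k
    using assms unfolding S3_def by blast+
  show "t$1$2$1 = t$1$1$2" using B[of 1 1 2] by simp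
  show "t$2$1$1 = t$1$1$2" using A[of 2 1 1] B[of 1 1 2] by simp
  show "t$2$1$2 = t$1$2$2" using A[of 2 1 2] by simp
  show "t$2$2$1 = t$1$2$2" using B[of 2 2 1] A[of 2 1 2] by simp
qed

lemma S21_contract:
  assumes "t \<in> S21"
  shows "contract13 t x w = contract23 t x w" "contract12 t x y = contract12 t y x"
  by (simp_all add: S21_nth[OF assms] vec2_eq_iff contract_nth algebra_simps)

lemma S3_contract:
  assumes "t \<in> S3"
  shows "contract13 t x w = contract23 t x w" "contract12 t x y = contract13 t x y"
    "contract23 t y w = contract23 t w y"
  by (simp_all add: S3_nth[OF assms] vec2_eq_iff contract_nth algebra_simps)

lemma S3_subset_S21: "S3 \<subseteq> S21"
  by (auto simp: S3_def S21_def)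

lemma crit_eqs_swap12: "t \<in> S21 \<Longrightarrow> crit_eqs t x y w \<Longrightarrow> crit_eqs t y x w"
  by (auto simp: crit_eqs_def S21_contract mult_ac)

lemma crit_eqs_swap23: "t \<in> S3 \<Longrightarrow> crit_eqs t x y w \<Longrightarrow> crit_eqs t x w y"
  by (auto simp: crit_eqs_def S3_contract mult_ac)

lemma crit_X21_iff:
  assumes S: "t \<in> S21"
  shows "crit X21 tan21 t z \<longleftrightarrow> crit X3 tan3 t z \<and> z \<in> X21"
proof
  assume crit: "crit X21 tan21 t z"
  then obtain x w where z: "z = tp x x w" and nz: "z \<noteq> 0" by (auto simp: crit_def X21_def)
  define U where "U = contract23 t x w - (q x x * q w w) *s x"
  define R where "R = contract12 t x x - (q x x * q x x) *s w"
  have tangent: "qt (t - tp x x w) (tp a x w + tp x a w + tp x x c) = 0" for a c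
    using crit unfolding crit_def tan21_def z by blast
  have "2 * q a U = 0" for a
    using tangent[of a 0] by (simp add: qt_diff_tangent3 S21_contract[OF S] U_def q_def)
  moreover have "q c R = 0" for c
    using tangent[of 0 c] by (simp add: qt_diff_tangent3 R_def q_def)
  ultimately have "U = 0" "R = 0"
    using q_left_eq_0_iff by auto
  then have "crit_eqs t x x w"
    by (simp add: crit_eqs_def S21_contract[OF S] U_def R_def)
  then have "crit X3 tan3 t z"
    using nz by (simp add: z crit_X3_tp_iff)
  then show "crit X3 tan3 t z \<and> z \<in> X21"
    using crit by (simp add: crit_def)
qed (auto simp: crit_def tan3_def tan21_def X3_def, blast+)

lemma crit_Xsym3_iff:
  assumes S: "t \<in> S3"
  shows "crit Xsym3 tansym3 t z \<longleftrightarrow> crit X3 tan3 t z \<and> z \<in> Xsym3"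
proof
  assume crit: "crit Xsym3 tansym3 t z"
  then obtain x where z: "z = tp x x x" and nz: "z \<noteq> 0" by (auto simp: crit_def Xsym3_def)
  define U where "U = contract23 t x x - (q x x * q x x) *s x"
  have "qt (t - tp x x x) (tp a x x + tp x a x + tp x x a) = 0" for a
    using crit unfolding crit_def tansym3_def z by blast
  then have "3 * q a U = 0" for a
    by (simp add: qt_diff_tangent3 S3_contract[OF S] U_def q_def)
  then have "U = 0"
    using q_left_eq_0_iff by auto
  then have "crit_eqs t x x x"
    by (simp add: crit_eqs_def S3_contract[OF S] U_def)
  then have "crit X3 tan3 t z"
    using nz by (simp add: z crit_X3_tp_iff)
  then show "crit X3 tan3 t z \<and> z \<in> Xsym3"
    using crit by (simp add: crit_def)
qed (auto simp: crit_def tan3_def tansym3_def X3_def, blast+)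

section \<open>Binary quadratic forms and \<open>2 \<times> 2\<close> matrices\<close>

lemma mat2_mult_vec_nth: "((M::complex^2^2) *v x) $ i = M$i$1 * x$1 + M$i$2 * x$2"
  by (simp add: matrix_vector_mult_def sum_2)

lemma mat2_mult_nth: "((A::complex^2^2) ** B) $ i $ j = A$i$1 * B$1$j + A$i$2 * B$2$j"
  by (simp add: matrix_matrix_mult_def sum_2)

lemma mat2_eq_iff:
  "(A::complex^2^2) = B \<longleftrightarrow> A$1$1 = B$1$1 \<and> A$1$2 = B$1$2 \<and> A$2$1 = B$2$1 \<and> A$2$2 = B$2$2"
  by (auto simp: vec_eq_iff forall_2)

lemma mat_1_2: "(mat 1 :: complex^2^2) $ 1 $ 1 = 1" "(mat 1 :: complex^2^2) $ 1 $ 2 = 0"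
  "(mat 1 :: complex^2^2) $ 2 $ 1 = 0" "(mat 1 :: complex^2^2) $ 2 $ 2 = 1"
  by (simp_all add: mat_def)

lemma mat2_mult_vec_smult [simp]: "(M::complex^2^2) *v (c *s x) = c *s (M *v x)"
  by (simp add: vec2_eq_iff mat2_mult_vec_nth algebra_simps)

lemma trace_2: "trace (M::complex^2^2) = M$1$1 + M$2$2"
  by (simp add: trace_def sum_2)

lemma traceless_2: "trace (M::complex^2^2) = 0 \<Longrightarrow> M$2$2 = - M$1$1"
  by (simp add: trace_2 eq_neg_iff_add_eq_0 add.commute)

lemma trace_mult_det2: "trace (M::complex^2^2) * det2 x y = det2 (M *v x) y + det2 x (M *v y)"
  by (simp add: trace_2 det2_def mat2_mult_vec_nth algebra_simps)

lemma traceless_mult_self: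
  fixes M :: "complex^2^2"
  assumes "trace M = 0"
  shows "M *v (M *v x) = (- det M) *s x"
proof -
  show ?thesis using traceless_2[OF assms] by (simp add: det_2 vec2_eq_iff mat2_mult_vec_nth algebra_simps)
qed

lemma q_mult_sym: "(M::complex^2^2)$2$1 = M$1$2 \<Longrightarrow> q (M *v x) y = q x (M *v y)"
  by (simp add: q_2 mat2_mult_vec_nth algebra_simps)

lemma q_traceless_sym:
  fixes M :: "complex^2^2"
  assumes "trace M = 0" "M$2$1 = M$1$2"
  shows "q (M *v x) (M *v y) = - det M * q x y"
proof -
  have "q (M *v x) (M *v y) = q x (M *v (M *v y))" by (rule q_mult_sym[OF assms(2)])
  also have "\<dots> = - det M * q x y" by (simp add: traceless_mult_self[OF assms(1)] q_2 algebra_simps)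
  finally show ?thesis .
qed

lemma neg_det_traceless_sym:
  fixes M :: "complex^2^2"
  assumes "trace M = 0" "M$2$1 = M$1$2"
  shows "- det M = (M$1$1)\<^sup>2 + (M$1$2)\<^sup>2"
proof -
  show ?thesis using traceless_2[OF assms(1)] assms(2) by (simp add: det_2 power2_eq_square)
qed

definition perp :: "vec \<Rightarrow> vec" where
  "perp v = vector [v$2, - v$1]"

lemma q_perp: "q v (perp v) = 0" "q (perp v) v = 0" "q (perp v) (perp v) = q v v"
  by (simp_all add: perp_def q_2 algebra_simps)

lemma q_eq_0_imp_smult_perp:
  assumes "q v w = 0" "v \<noteq> 0"
  shows "\<exists>k. w = k *s perp v"
proof -
  have "det2 w (perp v) = - q v w"
    by (simp add: det2_def perp_def q_2 algebra_simps)
  moreover have "perp v \<noteq> 0"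
    using assms(2) by (auto simp: perp_def vec2_eq_0_iff)
  ultimately have "det2 w (perp v) = 0" "perp v \<noteq> 0"
    using assms(1) by simp_all
  then show ?thesis by (rule det2_eq_0_imp_smult)
qed

lemma vec2_eq_if_q_eq_q_perp_eq:
  assumes "q v v \<noteq> 0" "q a v = q b v" "q a (perp v) = q b (perp v)"
  shows "a = b"
proof -
  have "q v v * a$1 = q v v * b$1" "q v v * a$2 = q v v * b$2"
    using assms(2,3) by (simp_all add: q_2 perp_def) algebra+
  then show ?thesis using assms(1) by (simp add: vec2_eq_iff)
qed

definition quad_form :: "complex^2^2 \<Rightarrow> vec \<Rightarrow> complex" where
  "quad_form P x = q x (P *v x)"

lemma quad_form_2: "quad_form P x = P$1$1 * (x$1)\<^sup>2 + (P$1$2 + P$2$1) * x$1 * x$2 + P$2$2 * (x$2)\<^sup>2"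
  by (simp add: quad_form_def q_2 mat2_mult_vec_nth algebra_simps power2_eq_square)

lemma quad_form_mat_1: "quad_form (mat 1) x = q x x"
  by (simp add: quad_form_def)

lemma quad_form_root_exists: "\<exists>z. z \<noteq> 0 \<and> quad_form P z = 0"
proof (cases "P$1$1 = 0")
  case True
  then show ?thesis
    by (intro exI[of _ "vector [1, 0]"]) (simp add: quad_form_2 vec2_eq_0_iff)
next
  case False
  define b where "b = P$1$2 + P$2$1"
  define d where "d = csqrt (b\<^sup>2 - 4 * P$1$1 * P$2$2)"
  have "d\<^sup>2 = b\<^sup>2 - 4 * P$1$1 * P$2$2" by (simp add: d_def)
  then have "quad_form P (vector [d - b, 2 * P$1$1]) = 0"
    unfolding quad_form_2 b_def[symmetric] by (simp add: power2_eq_square) algebra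
  moreover have "vector [d - b, 2 * P$1$1] \<noteq> (0::vec)"
    using False by (simp add: vec2_eq_0_iff)
  ultimately show ?thesis by blast
qed

text \<open>The Sylvester resultant of the binary quadratic forms \<open>quad_form P\<close> and \<open>quad_form R\<close>.\<close>
definition quad_res :: "complex^2^2 \<Rightarrow> complex^2^2 \<Rightarrow> complex" where
  "quad_res P R =
     (let p0 = P$1$1; p1 = P$1$2 + P$2$1; p2 = P$2$2; r0 = R$1$1; r1 = R$1$2 + R$2$1; r2 = R$2$2
      in (p0*r2 - p2*r0)\<^sup>2 - (p0*r1 - p1*r0) * (p1*r2 - p2*r1))"

lemma quad_res_common_root:
  assumes "quad_form P z = 0" "quad_form R z = 0" "z \<noteq> 0"
  shows "quad_res P R = 0"
proof -
  have "quad_res P R * (z$1)^3 = 0" "quad_res P R * (z$2)^3 = 0"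
    using assms(1,2) unfolding quad_res_def quad_form_2 Let_def by algebra+
  then show ?thesis using assms(3) by (auto simp: vec2_eq_0_iff)
qed

lemma quad_res_three_roots:
  assumes "quad_form P x = 0" "quad_form P u = 0" "quad_form P v = 0"
    and "det2 x u \<noteq> 0" "det2 x v \<noteq> 0" "det2 u v \<noteq> 0"
  shows "quad_res P R = 0"
proof -
  have "c * det2 x u * det2 x v * (det2 u v)\<^sup>2 = 0"
    if "c \<in> {P$1$1, P$1$2 + P$2$1, P$2$2}" for c
    using assms(1-3) that unfolding quad_form_2 det2_def by auto algebra+
  then have "P$1$1 = 0" "P$1$2 + P$2$1 = 0" "P$2$2 = 0"
    using assms(4-6) by auto
  then show ?thesis by (simp add: quad_res_def)
qed

definition rot90 :: "complex^2^2" where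
  "rot90 = vector [vector [0, 1], vector [-1, 0]]"

lemma det2_quad_form: "det2 x (M *v x) = quad_form (rot90 ** M) x"
  by (simp add: det2_def quad_form_def q_2 rot90_def mat2_mult_vec_nth mat2_mult_nth algebra_simps)

section \<open>Critical points with independent first two factors\<close>

definition pencil :: "tens \<Rightarrow> vec \<Rightarrow> complex^2^2" where
  "pencil t w = (\<chi> i j. \<Sum>k\<in>UNIV. t$i$j$k * w$k)"

lemma pencil_nth: "pencil t w $ i $ j = t$i$j$1 * w$1 + t$i$j$2 * w$2"
  by (simp add: pencil_def sum_2)

lemma pencil_sym: "t \<in> S21 \<Longrightarrow> pencil t w $ 2 $ 1 = pencil t w $ 1 $ 2"
  by (simp add: pencil_nth S21_nth)

lemma contract23_pencil: "contract23 t y w = pencil t w *v y"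
  by (simp add: vec2_eq_iff contract_nth pencil_nth mat2_mult_vec_nth algebra_simps)

lemma q_contract12_pencil: "q (contract12 t x y) w = q x (pencil t w *v y)"
  by (simp add: q_2 contract_nth pencil_nth mat2_mult_vec_nth algebra_simps)

lemma pencil_smult: "pencil t (c *s w) *v x = c *s (pencil t w *v x)"
  by (simp add: vec2_eq_iff pencil_nth mat2_mult_vec_nth algebra_simps)

definition trace_vec :: "tens \<Rightarrow> vec" where
  "trace_vec t = (\<chi> k. \<Sum>i\<in>UNIV. t$i$i$k)"

lemma trace_pencil: "trace (pencil t w) = q (trace_vec t) w"
  by (simp add: trace_2 pencil_nth trace_vec_def q_2 sum_2 algebra_simps)

definition traceless_dir :: "tens \<Rightarrow> vec" where
  "traceless_dir t = perp (trace_vec t)"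

definition traceless_pencil :: "tens \<Rightarrow> complex^2^2" where
  "traceless_pencil t = pencil t (traceless_dir t)"

lemma trace_traceless_pencil: "trace (traceless_pencil t) = 0"
  by (simp add: traceless_pencil_def traceless_dir_def trace_pencil q_perp)

text \<open>\<open>quad_form (pair_matrix t)\<close> is the form \<open>h(x) = t(x, M\<^sub>0 x, \<tau>)\<close>, where
  \<open>M\<^sub>0 = traceless_pencil t\<close> and \<open>\<tau> = trace_vec t\<close>.\<close>
definition pair_matrix :: "tens \<Rightarrow> complex^2^2" where
  "pair_matrix t = pencil t (trace_vec t) ** traceless_pencil t"

lemma quad_form_pair_matrix: "quad_form (pair_matrix t) x = q x (pencil t (trace_vec t) *v (traceless_pencil t *v x))"
  by (simp add: quad_form_def pair_matrix_def matrix_vector_mul_assoc)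

lemma traceless_pencil_sym: "t \<in> S21 \<Longrightarrow> traceless_pencil t $ 2 $ 1 = traceless_pencil t $ 1 $ 2"
  by (simp add: traceless_pencil_def pencil_sym)

lemma traceless_pencil_mult_eq_0_imp:
  "det (traceless_pencil t) \<noteq> 0 \<Longrightarrow> traceless_pencil t *v v = 0 \<Longrightarrow> v = 0"
  using traceless_mult_self[OF trace_traceless_pencil, of t v] by simp

lemma q_traceless_dir: "q (traceless_dir t) (traceless_dir t) = q (trace_vec t) (trace_vec t)"
  by (simp add: traceless_dir_def q_perp)

lemma crit_eqs_indep_shape:
  assumes S: "t \<in> S21" and crit: "crit_eqs t x y w" and indep: "det2 x y \<noteq> 0" and "w \<noteq> 0"
    and D: "det (traceless_pencil t) \<noteq> 0" and rho: "q (trace_vec t) (trace_vec t) \<noteq> 0"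
  obtains k where "k \<noteq> 0" "w = k *s traceless_dir t"
    "y = (k / (q x x * q w w)) *s (traceless_pencil t *v x)"
    "q x x \<noteq> 0" "q y y \<noteq> 0" "q w w \<noteq> 0"
proof -
  let ?M = "traceless_pencil t"
  have eq1: "pencil t w *v y = (q y y * q w w) *s x" and eq2: "pencil t w *v x = (q x x * q w w) *s y"
    using crit unfolding crit_eqs_def S21_contract(1)[OF S] contract23_pencil by simp_all
  have "trace (pencil t w) * det2 x y = 0"
    unfolding trace_mult_det2 eq1 eq2 by (simp add: det2_def algebra_simps)
  then have "q (trace_vec t) w = 0"
    using indep by (simp add: trace_pencil)
  moreover have "trace_vec t \<noteq> 0"
    using rho by (auto simp: q_def)
  ultimately obtain k where w: "w = k *s traceless_dir t"
    using q_eq_0_imp_smult_perp by (auto simp: traceless_dir_def)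
  have k: "k \<noteq> 0" using \<open>w \<noteq> 0\<close> w by auto
  have Mx: "k *s (?M *v x) = (q x x * q w w) *s y" and My: "k *s (?M *v y) = (q y y * q w w) *s x"
    using eq1 eq2 by (simp_all add: w pencil_smult traceless_pencil_def)
  have "x \<noteq> 0" "y \<noteq> 0" using det2_neq_0_imp_neq_0[OF indep] by auto
  then have "?M *v x \<noteq> 0" "?M *v y \<noteq> 0"
    using traceless_pencil_mult_eq_0_imp[OF D] by blast+
  then have "q x x * q w w \<noteq> 0" "q y y * q w w \<noteq> 0"
    using Mx My k by auto
  moreover have "y = (k / (q x x * q w w)) *s (?M *v x)"
    using Mx calculation(1) by (simp add: vec2_eq_iff field_simps)
  ultimately show ?thesis using that k w by simp
qed

lemma crit_eqs_indep_pair_form: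
  assumes "t \<in> S21" and crit: "crit_eqs t x y w" and "det2 x y \<noteq> 0" and "w \<noteq> 0"
    and "det (traceless_pencil t) \<noteq> 0" and "q (trace_vec t) (trace_vec t) \<noteq> 0"
  shows "quad_form (pair_matrix t) x = 0"
proof -
  obtain k where k: "k \<noteq> 0" "w = k *s traceless_dir t"
    and y: "y = (k / (q x x * q w w)) *s (traceless_pencil t *v x)" and "q x x \<noteq> 0" "q w w \<noteq> 0"
    using crit_eqs_indep_shape[OF assms] .
  have "q (contract12 t x y) (trace_vec t) = 0"
    using crit k(2) by (simp add: crit_eqs_def traceless_dir_def q_perp)
  moreover have "q (contract12 t x y) (trace_vec t) = (k / (q x x * q w w)) * quad_form (pair_matrix t) x"
    by (simp add: q_contract12_pencil y quad_form_pair_matrix)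
  ultimately show ?thesis
    using k(1) \<open>q x x \<noteq> 0\<close> \<open>q w w \<noteq> 0\<close> by simp
qed

lemma crit_eqs_indep_norms:
  assumes S: "t \<in> S21" and "crit_eqs t x y w" and "det2 x y \<noteq> 0" and "w \<noteq> 0"
    and "det (traceless_pencil t) \<noteq> 0" and "q (trace_vec t) (trace_vec t) \<noteq> 0"
  shows "q x x * q y y * q w w * q (trace_vec t) (trace_vec t) = - det (traceless_pencil t)"
proof -
  obtain k where k: "k \<noteq> 0" "w = k *s traceless_dir t"
    and y: "y = (k / (q x x * q w w)) *s (traceless_pencil t *v x)" and "q x x \<noteq> 0" "q w w \<noteq> 0"
    using crit_eqs_indep_shape[OF assms] .
  have qw: "q w w = k\<^sup>2 * q (trace_vec t) (trace_vec t)"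
    by (simp add: k(2) q_traceless_dir power2_eq_square)
  have "q y y = (k / (q x x * q w w))\<^sup>2 * (- det (traceless_pencil t)) * q x x"
    by (simp add: y q_traceless_sym trace_traceless_pencil traceless_pencil_sym[OF S] power2_eq_square)
  then show ?thesis
    using \<open>q x x \<noteq> 0\<close> \<open>q w w \<noteq> 0\<close> unfolding qw by (simp add: field_simps power2_eq_square)
qed

lemma crit_eqs_pair_of_root:
  assumes S: "t \<in> S21" and h: "quad_form (pair_matrix t) x = 0"
    and x: "q x x \<noteq> 0" and rho: "q (trace_vec t) (trace_vec t) \<noteq> 0"
  shows "crit_eqs t x ((1 / (q x x * q (trace_vec t) (trace_vec t))) *s (traceless_pencil t *v x))
           (traceless_dir t)"
proof -
  let ?M = "traceless_pencil t" and ?\<tau> = "trace_vec t"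
  define s where "s = 1 / (q x x * q ?\<tau> ?\<tau>)"
  define y where "y = s *s (?M *v x)"
  have s: "s * (q x x * q ?\<tau> ?\<tau>) = 1" using x rho by (simp add: s_def)
  have MM: "?M *v (?M *v v) = (- det ?M) *s v" for v
    by (rule traceless_mult_self[OF trace_traceless_pencil])
  have qy: "q y y = s\<^sup>2 * (- det ?M) * q x x"
    by (simp add: y_def q_traceless_sym trace_traceless_pencil traceless_pencil_sym[OF S] power2_eq_square)
  have eq1: "contract23 t y (traceless_dir t) = (q y y * q (traceless_dir t) (traceless_dir t)) *s x"
  proof -
    have "contract23 t y (traceless_dir t) = (s * - det ?M) *s x"
      by (simp add: contract23_pencil y_def MM flip: traceless_pencil_def)
    also have "\<dots> = (q y y * q ?\<tau> ?\<tau>) *s x"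
      using s by (simp add: qy power2_eq_square algebra_simps)
    finally show ?thesis by (simp add: q_traceless_dir)
  qed
  have eq2: "contract13 t x (traceless_dir t) = (q x x * q (traceless_dir t) (traceless_dir t)) *s y"
    using s by (simp add: S21_contract[OF S] contract23_pencil y_def q_traceless_dir mult_ac
        flip: traceless_pencil_def)
  have eq3: "contract12 t x y = (q x x * q y y) *s traceless_dir t"
  proof (rule vec2_eq_if_q_eq_q_perp_eq[OF rho])
    show "q (contract12 t x y) ?\<tau> = q ((q x x * q y y) *s traceless_dir t) ?\<tau>"
      using h by (simp add: q_contract12_pencil y_def quad_form_pair_matrix traceless_dir_def q_perp)
    have "q (contract12 t x y) (perp ?\<tau>) = s * (- det ?M) * q x x"
      by (simp add: q_contract12_pencil y_def MM flip: traceless_dir_def traceless_pencil_def)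
    also have "\<dots> = q ((q x x * q y y) *s traceless_dir t) (perp ?\<tau>)"
      using s by (simp add: qy traceless_dir_def q_perp power2_eq_square algebra_simps)
    finally show "q (contract12 t x y) (perp ?\<tau>) = q ((q x x * q y y) *s traceless_dir t) (perp ?\<tau>)" .
  qed
  show ?thesis
    using eq1 eq2 eq3 by (simp add: crit_eqs_def y_def s_def)
qed

lemma crit_eqs_pair_exists:
  assumes S: "t \<in> S21" and rho: "q (trace_vec t) (trace_vec t) \<noteq> 0"
    and iso: "quad_res (pair_matrix t) (mat 1) \<noteq> 0"
    and eig: "quad_res (pair_matrix t) (rot90 ** traceless_pencil t) \<noteq> 0"
  obtains x y where "det2 x y \<noteq> 0" "crit_eqs t x y (traceless_dir t)"
proof -
  obtain x where x: "x \<noteq> 0" "quad_form (pair_matrix t) x = 0"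
    using quad_form_root_exists by blast
  have qx: "q x x \<noteq> 0"
    using quad_res_common_root[OF x(2) _ x(1)] iso by (auto simp: quad_form_mat_1)
  have "det2 x (traceless_pencil t *v x) \<noteq> 0"
    using quad_res_common_root[OF x(2) _ x(1)] eig by (auto simp: det2_quad_form)
  with qx rho have "det2 x ((1 / (q x x * q (trace_vec t) (trace_vec t))) *s (traceless_pencil t *v x)) \<noteq> 0"
    by simp
  with crit_eqs_pair_of_root[OF S x(2) qx rho] show ?thesis
    using that by blast
qed

lemma crit_eqs_indep_determined:
  assumes S: "t \<in> S21" and D: "det (traceless_pencil t) \<noteq> 0"
    and rho: "q (trace_vec t) (trace_vec t) \<noteq> 0"
    and crit: "crit_eqs t x y w" "det2 x y \<noteq> 0" "w \<noteq> 0"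
    and crit': "crit X3 tan3 t (tp x' y' w')" "det2 x' y' \<noteq> 0"
    and par: "det2 x' x = 0"
  shows "tp x' y' w' = tp x y w"
proof -
  have crit'_eqs: "crit_eqs t x' y' w'" and "w' \<noteq> 0"
    using crit'(1) by (auto simp: crit_X3_tp_iff tp_eq_0_iff)
  obtain k where k: "k \<noteq> 0" "w = k *s traceless_dir t"
    and y: "y = (k / (q x x * q w w)) *s (traceless_pencil t *v x)" and "q x x \<noteq> 0" "q y y \<noteq> 0" "q w w \<noteq> 0"
    using crit_eqs_indep_shape[OF S crit D rho] .
  obtain k' where k': "w' = k' *s traceless_dir t"
    and y': "y' = (k' / (q x' x' * q w' w')) *s (traceless_pencil t *v x')"
    using crit_eqs_indep_shape[OF S crit'_eqs crit'(2) \<open>w' \<noteq> 0\<close> D rho] .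
  obtain l where l: "x' = l *s x"
    using det2_eq_0_imp_smult[OF par] det2_neq_0_imp_neq_0[OF crit(2)] by blast
  define c where "c = k / (q x x * q w w)"
  define c' where "c' = k' / (q x' x' * q w' w')"
  have "c \<noteq> 0" using k(1) \<open>q x x \<noteq> 0\<close> \<open>q w w \<noteq> 0\<close> by (simp add: c_def)
  then have "traceless_pencil t *v x = (1 / c) *s y"
    by (simp add: y flip: c_def)
  moreover have "y' = c' *s (traceless_pencil t *v x')"
    unfolding c'_def by (rule y')
  ultimately have "y' = (c' * l / c) *s y"
    by (simp add: l)
  moreover have "w' = (k' / k) *s w"
    using k by (simp add: k')
  ultimately have eq: "tp x' y' w' = tp ((l * (c' * l / c) * (k' / k)) *s x) y w"
    by (simp add: l tp_smult_to_first mult_ac)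
  then have "crit_eqs t ((l * (c' * l / c) * (k' / k)) *s x) y w"
    and "l * (c' * l / c) * (k' / k) \<noteq> 0"
    using crit'(1) by (auto simp: crit_X3_tp_iff tp_eq_0_iff)
  then have "l * (c' * l / c) * (k' / k) = 1"
    using crit_eqs_smult_eq_1[OF crit(1)] \<open>q x x \<noteq> 0\<close> \<open>q y y \<noteq> 0\<close> crit(3) by blast
  then show ?thesis using eq by simp
qed

lemma crit_X3_indep_cases:
  assumes S: "t \<in> S21" and D: "det (traceless_pencil t) \<noteq> 0"
    and rho: "q (trace_vec t) (trace_vec t) \<noteq> 0" and iso: "quad_res (pair_matrix t) (mat 1) \<noteq> 0"
    and crit1: "crit_eqs t x1 y1 w1" "det2 x1 y1 \<noteq> 0" "w1 \<noteq> 0"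
    and crit: "crit X3 tan3 t (tp x y w)" "det2 x y \<noteq> 0"
  shows "tp x y w = tp x1 y1 w1 \<or> tp x y w = tp y1 x1 w1"
proof -
  have crit_eqs: "crit_eqs t x y w" "w \<noteq> 0"
    using crit(1) by (auto simp: crit_X3_tp_iff tp_eq_0_iff)
  have swap1: "crit_eqs t y1 x1 w1" "det2 y1 x1 \<noteq> 0"
    using crit_eqs_swap12[OF S crit1(1)] crit1(2) det2_commute[of y1 x1] by auto
  have h: "quad_form (pair_matrix t) x = 0" "quad_form (pair_matrix t) x1 = 0"
    "quad_form (pair_matrix t) y1 = 0"
    using crit_eqs_indep_pair_form[OF S crit_eqs(1) crit(2) crit_eqs(2) D rho]
      crit_eqs_indep_pair_form[OF S crit1 D rho]
      crit_eqs_indep_pair_form[OF S swap1 crit1(3) D rho] by simp_all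
  have "det2 x x1 = 0 \<or> det2 x y1 = 0"
  proof (rule ccontr)
    assume "\<not> ?thesis"
    then have "quad_res (pair_matrix t) (mat 1) = 0"
      using quad_res_three_roots[OF h _ _ crit1(2)] by blast
    with iso show False ..
  qed
  then show ?thesis
  proof
    assume "det2 x x1 = 0"
    then show ?thesis using crit_eqs_indep_determined[OF S D rho crit1 crit] by simp
  next
    assume "det2 x y1 = 0"
    then show ?thesis
      using crit_eqs_indep_determined[OF S D rho swap1(1) swap1(2) crit1(3) crit] by simp
  qed
qed

lemma tp_notin_X21:
  assumes "det2 x y \<noteq> 0" "w \<noteq> 0"
  shows "tp x y w \<notin> X21"
proof
  assume "tp x y w \<in> X21"
  then obtain u v where e: "tp x y w = tp u u v" by (auto simp: X21_def)
  obtain k where k: "w$k \<noteq> 0" using assms(2) by (auto simp: vec_eq_iff)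
  have "x$1 * y$2 * w$k = x$2 * y$1 * w$k"
    using arg_cong[OF e, of "\<lambda>z. z$1$2$k"] arg_cong[OF e, of "\<lambda>z. z$2$1$k"] by simp
  then have "det2 x y * w$k = 0" by (simp add: det2_def algebra_simps)
  then show False using assms(1) k by simp
qed

lemma tp_swap12_neq:
  assumes "det2 x y \<noteq> 0" "w \<noteq> 0"
  shows "tp x y w \<noteq> tp y x w"
proof
  assume e: "tp x y w = tp y x w"
  obtain k where k: "w$k \<noteq> 0" using assms(2) by (auto simp: vec_eq_iff)
  have "x$1 * y$2 * w$k = y$1 * x$2 * w$k" using arg_cong[OF e, of "\<lambda>z. z$1$2$k"] by simp
  then have "det2 x y * w$k = 0" by (simp add: det2_def algebra_simps)
  then show False using assms(1) k by simp
qed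

lemma crit_X3_S21_eq:
  assumes S: "t \<in> S21" and D: "det (traceless_pencil t) \<noteq> 0"
    and rho: "q (trace_vec t) (trace_vec t) \<noteq> 0" and iso: "quad_res (pair_matrix t) (mat 1) \<noteq> 0"
    and crit1: "crit_eqs t x1 y1 w1" "det2 x1 y1 \<noteq> 0" "w1 \<noteq> 0"
  shows "{z. crit X3 tan3 t z} = {z. crit X21 tan21 t z} \<union> {tp x1 y1 w1, tp y1 x1 w1}"
proof (intro equalityI subsetI)
  fix z assume "z \<in> {z. crit X3 tan3 t z}"
  then have crit: "crit X3 tan3 t z" by simp
  then obtain x y w where z: "z = tp x y w" "tp x y w \<noteq> 0" by (auto simp: crit_def X3_def)
  show "z \<in> {z. crit X21 tan21 t z} \<union> {tp x1 y1 w1, tp y1 x1 w1}"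
  proof (cases "det2 x y = 0")
    case True
    then obtain l where "x = l *s y"
      using det2_eq_0_imp_smult z(2) by (auto simp: tp_eq_0_iff)
    then have "z = tp y y (l *s w)"
      by (simp add: z tp_smult_to_first)
    then have "z \<in> X21"
      unfolding X21_def by blast
    then show ?thesis using crit crit_X21_iff[OF S] by blast
  next
    case False
    have "crit X3 tan3 t (tp x y w)" using crit z by simp
    from crit_X3_indep_cases[OF S D rho iso crit1 this False] show ?thesis
      unfolding z by blast
  qed
next
  fix z assume z: "z \<in> {z. crit X21 tan21 t z} \<union> {tp x1 y1 w1, tp y1 x1 w1}"
  have "tp x1 y1 w1 \<noteq> 0" "tp y1 x1 w1 \<noteq> 0"
    using crit1(3) det2_neq_0_imp_neq_0[OF crit1(2)] by (auto simp: tp_eq_0_iff)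
  then have "crit X3 tan3 t (tp x1 y1 w1)" "crit X3 tan3 t (tp y1 x1 w1)"
    using crit1(1) crit_eqs_swap12[OF S crit1(1)] crit_X3_tp_iff by blast+
  with z show "z \<in> {z. crit X3 tan3 t z}"
    using crit_X21_iff[OF S, of z] by blast
qed

section \<open>Critical points on \<open>X21\<close>\<close>

definition slice :: "tens \<Rightarrow> 2 \<Rightarrow> complex^2^2" where
  "slice t k = (\<chi> i j. t$i$j$k)"

lemma contract12_diag_nth: "contract12 t x x $ k = quad_form (slice t k) x"
  by (simp add: contract_nth quad_form_def q_2 slice_def mat2_mult_vec_nth algebra_simps)

lemma contract12_diag_neq_0:
  assumes "quad_res (slice t 1) (slice t 2) \<noteq> 0" "x \<noteq> 0"
  shows "contract12 t x x \<noteq> 0"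
proof
  assume "contract12 t x x = 0"
  then have "quad_form (slice t 1) x = 0" "quad_form (slice t 2) x = 0"
    by (metis contract12_diag_nth zero_index)+
  with assms show False using quad_res_common_root by blast
qed

definition x21_form :: "tens \<Rightarrow> vec \<Rightarrow> complex" where
  "x21_form t x = det2 x (pencil t (contract12 t x x) *v x)"

definition x21_point :: "tens \<Rightarrow> vec \<Rightarrow> tens" where
  "x21_point t x = tp x x ((1 / (q x x)\<^sup>2) *s contract12 t x x)"

lemma x21_form_smult: "x21_form t (c *s x) = c^4 * x21_form t x"
  by (simp add: x21_form_def pencil_smult power4_eq_xxxx mult_ac)

lemma x21_point_smult: "c \<noteq> 0 \<Longrightarrow> x21_point t (c *s x) = x21_point t x"
  by (simp add: x21_point_def tp_smult_to_first power2_eq_square field_simps)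

lemma crit_eqs_diag_iff:
  assumes S: "t \<in> S21" and x: "q x x \<noteq> 0"
  shows "crit_eqs t x x w \<longleftrightarrow> x21_form t x = 0 \<and> w = (1 / (q x x)\<^sup>2) *s contract12 t x x"
proof
  assume crit: "crit_eqs t x x w"
  then have W: "contract12 t x x = (q x x)\<^sup>2 *s w" and Mx: "pencil t w *v x = (q x x * q w w) *s x"
    by (simp_all add: crit_eqs_def contract23_pencil power2_eq_square)
  have "x21_form t x = (q x x)\<^sup>2 * (q x x * q w w) * det2 x x"
    by (simp add: x21_form_def W pencil_smult Mx)
  then show "x21_form t x = 0 \<and> w = (1 / (q x x)\<^sup>2) *s contract12 t x x"
    using x by (simp add: det2_def W)
next
  assume "x21_form t x = 0 \<and> w = (1 / (q x x)\<^sup>2) *s contract12 t x x"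
  then have f: "x21_form t x = 0" and w: "w = (1 / (q x x)\<^sup>2) *s contract12 t x x" by simp_all
  have W: "contract12 t x x = (q x x * q x x) *s w"
    using x by (simp add: w power2_eq_square)
  have "det2 (pencil t w *v x) x = 0"
    using f by (simp add: x21_form_def w pencil_smult det2_commute[of x])
  moreover have "x \<noteq> 0" using x by (auto simp: q_def)
  ultimately obtain \<mu> where \<mu>: "pencil t w *v x = \<mu> *s x"
    using det2_eq_0_imp_smult by blast
  have "\<mu> * q x x = q (contract12 t x x) w"
    by (simp add: q_contract12_pencil \<mu> mult.commute)
  also have "\<dots> = q x x * q x x * q w w"
    by (simp add: W)
  finally have "\<mu> = q x x * q w w"
    using x by simp
  then show "crit_eqs t x x w"
    by (simp add: crit_eqs_def S21_contract[OF S] contract23_pencil \<mu> W)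
qed

lemma crit_X21_iff_x21_point:
  assumes S: "t \<in> S21" and res: "quad_res (slice t 1) (slice t 2) \<noteq> 0"
  shows "crit X21 tan21 t z \<longleftrightarrow> (\<exists>x. q x x \<noteq> 0 \<and> x21_form t x = 0 \<and> z = x21_point t x)"
proof
  assume "crit X21 tan21 t z"
  then have crit: "crit X3 tan3 t z" and "z \<in> X21"
    using crit_X21_iff[OF S] by simp_all
  then obtain x w where z: "z = tp x x w" by (auto simp: X21_def)
  with crit have eqs: "crit_eqs t x x w" and "x \<noteq> 0" "w \<noteq> 0"
    by (simp_all add: crit_X3_tp_iff tp_eq_0_iff)
  have "q x x \<noteq> 0"
  proof
    assume "q x x = 0"
    then have "contract12 t x x = 0" using eqs by (simp add: crit_eqs_def)
    with contract12_diag_neq_0[OF res \<open>x \<noteq> 0\<close>] show False ..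
  qed
  with eqs show "\<exists>x. q x x \<noteq> 0 \<and> x21_form t x = 0 \<and> z = x21_point t x"
    using crit_eqs_diag_iff[OF S] by (auto simp: z x21_point_def)
next
  assume "\<exists>x. q x x \<noteq> 0 \<and> x21_form t x = 0 \<and> z = x21_point t x"
  then obtain x where x: "q x x \<noteq> 0" "x21_form t x = 0" and z: "z = x21_point t x" by blast
  have "x \<noteq> 0" using x by (auto simp: q_def)
  then have "tp x x ((1 / (q x x)\<^sup>2) *s contract12 t x x) \<noteq> 0"
    using contract12_diag_neq_0[OF res] x(1) by (simp add: tp_eq_0_iff vec2_eq_0_iff)
  moreover have "crit_eqs t x x ((1 / (q x x)\<^sup>2) *s contract12 t x x)"
    using crit_eqs_diag_iff[OF S x(1)] x(2) by simp
  ultimately have "crit X3 tan3 t z" "z \<in> X21"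
    by (auto simp: z x21_point_def crit_X3_tp_iff X21_def)
  then show "crit X21 tan21 t z" using crit_X21_iff[OF S] by blast
qed

definition x21_quartic :: "tens \<Rightarrow> complex poly" where
  "x21_quartic t =
     [: t$1$1$1*t$1$2$1 + t$1$1$2*t$1$2$2,
        t$1$1$1*t$2$2$1 - (t$1$1$1)\<^sup>2 + t$1$1$2*t$2$2$2 - (t$1$1$2)\<^sup>2 + 2*(t$1$2$1)\<^sup>2 + 2*(t$1$2$2)\<^sup>2,
        3*t$1$2$1*t$2$2$1 + 3*t$1$2$2*t$2$2$2 - 3*t$1$1$1*t$1$2$1 - 3*t$1$1$2*t$1$2$2,
        (t$2$2$1)\<^sup>2 + (t$2$2$2)\<^sup>2 - t$1$1$1*t$2$2$1 - t$1$1$2*t$2$2$2 - 2*(t$1$2$1)\<^sup>2 - 2*(t$1$2$2)\<^sup>2,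
        - t$1$2$1*t$2$2$1 - t$1$2$2*t$2$2$2 :]"

lemma poly_x21_quartic: "t \<in> S21 \<Longrightarrow> poly (x21_quartic t) s = x21_form t (vector [1, s])"
  by (simp add: x21_quartic_def x21_form_def det2_def pencil_nth contract_nth mat2_mult_vec_nth
      S21_nth power2_eq_square) algebra

lemma x21_form_vertical: "t \<in> S21 \<Longrightarrow> x21_form t (vector [0, 1]) = coeff (x21_quartic t) 4"
  by (simp add: x21_quartic_def x21_form_def det2_def pencil_nth contract_nth mat2_mult_vec_nth
      S21_nth eval_nat_numeral)

lemma x21_point_neq_0:
  assumes "quad_res (slice t 1) (slice t 2) \<noteq> 0" "q x x \<noteq> 0"
  shows "x21_point t x \<noteq> 0"
proof -
  have "x \<noteq> 0" using assms(2) by (auto simp: q_def)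
  then show ?thesis
    using contract12_diag_neq_0[OF assms(1)] assms(2) by (simp add: x21_point_def tp_eq_0_iff vec2_eq_0_iff)
qed

lemma q_chart_neq_0:
  assumes "poly p \<i> * poly p (- \<i>) \<noteq> 0" "poly p s = 0"
  shows "q (vector [1, s]) (vector [1, s]) \<noteq> 0"
proof
  assume "q (vector [1, s]) (vector [1, s]) = 0"
  then have "(s - \<i>) * (s + \<i>) = 0" by (simp add: q_2 algebra_simps)
  then have "s = \<i> \<or> s = - \<i>" by (auto simp: eq_neg_iff_add_eq_0)
  with assms show False by auto
qed

lemma crit_X21_eq_image:
  assumes S: "t \<in> S21" and res: "quad_res (slice t 1) (slice t 2) \<noteq> 0"
    and lead: "coeff (x21_quartic t) 4 \<noteq> 0"
    and iso: "poly (x21_quartic t) \<i> * poly (x21_quartic t) (- \<i>) \<noteq> 0"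
  shows "{z. crit X21 tan21 t z} = (\<lambda>s. x21_point t (vector [1, s])) ` {s. poly (x21_quartic t) s = 0}"
proof (intro equalityI subsetI)
  fix z assume "z \<in> {z. crit X21 tan21 t z}"
  then obtain x where x: "q x x \<noteq> 0" "x21_form t x = 0" and z: "z = x21_point t x"
    using crit_X21_iff_x21_point[OF S res] by auto
  have "x$1 \<noteq> 0"
  proof
    assume "x$1 = 0"
    then have "x = x$2 *s vector [0, 1]" by (simp add: vec2_eq_iff)
    then have "x21_form t x = (x$2)^4 * coeff (x21_quartic t) 4"
      by (metis x21_form_smult x21_form_vertical[OF S])
    with x(2) lead have "x$2 = 0" by simp
    with x(1) \<open>x$1 = 0\<close> show False by (simp add: q_2)
  qed
  define c where "c = x$1"
  define s where "s = x$2 / x$1"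
  have c: "c \<noteq> 0" and xs: "x = c *s vector [1, s]"
    using \<open>x$1 \<noteq> 0\<close> by (simp_all add: vec2_eq_iff s_def c_def)
  have "c^4 * poly (x21_quartic t) s = 0"
    using x(2) by (simp only: xs x21_form_smult poly_x21_quartic[OF S])
  moreover have "z = x21_point t (vector [1, s])"
    by (simp only: z xs x21_point_smult[OF c])
  ultimately show "z \<in> (\<lambda>s. x21_point t (vector [1, s])) ` {s. poly (x21_quartic t) s = 0}"
    using c by simp
next
  fix z assume "z \<in> (\<lambda>s. x21_point t (vector [1, s])) ` {s. poly (x21_quartic t) s = 0}"
  then obtain s where s: "poly (x21_quartic t) s = 0" and z: "z = x21_point t (vector [1, s])"
    by blast
  have "q (vector [1, s]) (vector [1, s]) \<noteq> 0"
    using q_chart_neq_0[OF iso s] .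
  then show "z \<in> {z. crit X21 tan21 t z}"
    using crit_X21_iff_x21_point[OF S res] s z by (auto simp: poly_x21_quartic[OF S])
qed

lemma inj_on_x21_point_chart:
  assumes "quad_res (slice t 1) (slice t 2) \<noteq> 0"
  shows "inj_on (\<lambda>s. x21_point t (vector [1, s])) {s. q (vector [1, s]) (vector [1, s]) \<noteq> 0}"
proof (rule inj_onI)
  fix s s' assume s: "s \<in> {s. q (vector [1, s]) (vector [1, s]) \<noteq> 0}"
    and eq: "x21_point t (vector [1, s]) = x21_point t (vector [1, s'])"
  have "x21_point t (vector [1, s]) \<noteq> 0"
    using x21_point_neq_0[OF assms] s by simp
  then obtain l m n where "vector [1, s'] = l *s (vector [1, s] :: vec)"
    using tp_eq_tp_imp_smult eq[symmetric] unfolding x21_point_def by blast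
  then show "s = s'" by (simp add: vec2_eq_iff)
qed

text \<open>The discriminant of \<open>a s\<^sup>4 + b s\<^sup>3 + c s\<^sup>2 + d s + e\<close>: the leading coefficient comes first.\<close>
definition quartic_disc :: "complex \<Rightarrow> complex \<Rightarrow> complex \<Rightarrow> complex \<Rightarrow> complex \<Rightarrow> complex" where
  "quartic_disc a b c d e =
     256*a^3*e^3 - 192*a^2*b*d*e^2 - 128*a^2*c^2*e^2 + 144*a^2*c*d^2*e - 27*a^2*d^4
     + 144*a*b^2*c*e^2 - 6*a*b^2*d^2*e - 80*a*b*c^2*d*e + 18*a*b*c*d^3 + 16*a*c^4*e
     - 4*a*c^3*d^2 - 27*b^4*e^2 + 18*b^3*c*d*e - 4*b^3*d^3 - 4*b^2*c^3*e + b^2*c^2*d^2"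

lemma quartic_disc_double_root:
  assumes "e + d*r + c*r^2 + b*r^3 + a*r^4 = 0" "d + 2*c*r + 3*b*r^2 + 4*a*r^3 = 0"
  shows "quartic_disc a b c d e = 0"
proof -
  have d: "d = - (2*c*r + 3*b*r^2 + 4*a*r^3)"
    using assms(2) by (simp add: algebra_simps eq_neg_iff_add_eq_0)
  have e: "e = - (d*r + c*r^2 + b*r^3 + a*r^4)"
    using assms(1) by (simp add: algebra_simps eq_neg_iff_add_eq_0)
  show ?thesis unfolding quartic_disc_def e d by algebra
qed

lemma rsquarefree_quartic:
  assumes "quartic_disc a b c d e \<noteq> 0"
  shows "rsquarefree [:e, d, c, b, a:]"
  unfolding rsquarefree_roots
proof (intro allI notI)
  fix r assume "poly [:e, d, c, b, a:] r = 0 \<and> poly (pderiv [:e, d, c, b, a:]) r = 0"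
  then have "e + d*r + c*r^2 + b*r^3 + a*r^4 = 0" "d + 2*c*r + 3*b*r^2 + 4*a*r^3 = 0"
    by (simp_all add: pderiv_pCons algebra_simps power2_eq_square power3_eq_cube power4_eq_xxxx)
  with assms show False using quartic_disc_double_root by blast
qed

lemma card_roots_rsquarefree:
  assumes "rsquarefree (p :: complex poly)"
  shows "card {z. poly p z = 0} = degree p"
proof -
  have p: "p \<noteq> 0" using assms by (simp add: rsquarefree_def)
  have "degree p = degree (smult (lead_coeff p) (\<Prod>z|poly p z = 0. [:-z, 1:]))"
    using complex_poly_decompose_rsquarefree[OF assms] by simp
  also have "\<dots> = (\<Sum>z|poly p z = 0. degree [:-z, 1:])"
    using p by (simp add: degree_prod_sum_eq)
  also have "\<dots> = card {z. poly p z = 0}" by simp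
  finally show ?thesis ..
qed

lemma card_crit_X21:
  assumes S: "t \<in> S21" and res: "quad_res (slice t 1) (slice t 2) \<noteq> 0"
    and lead: "coeff (x21_quartic t) 4 \<noteq> 0"
    and iso: "poly (x21_quartic t) \<i> * poly (x21_quartic t) (- \<i>) \<noteq> 0"
    and disc: "quartic_disc (coeff (x21_quartic t) 4) (coeff (x21_quartic t) 3)
      (coeff (x21_quartic t) 2) (coeff (x21_quartic t) 1) (coeff (x21_quartic t) 0) \<noteq> 0"
  shows "card {z. crit X21 tan21 t z} = 4"
proof -
  have "inj_on (\<lambda>s. x21_point t (vector [1, s])) {s. poly (x21_quartic t) s = 0}"
    by (rule inj_on_subset[OF inj_on_x21_point_chart[OF res]]) (auto dest: q_chart_neq_0[OF iso])
  moreover have "card {s. poly (x21_quartic t) s = 0} = 4"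
    using card_roots_rsquarefree[OF rsquarefree_quartic[OF disc]] lead
    by (simp add: x21_quartic_def eval_nat_numeral)
  ultimately show ?thesis
    by (simp add: crit_X21_eq_image[OF S res lead iso] card_image)
qed

section \<open>Singular values\<close>

lemma singular_value_crit_eqs:
  assumes crit: "crit_eqs t x y w" and "q x x \<noteq> 0" "q y y \<noteq> 0" "q w w \<noteq> 0"
  shows "singular_value t (tp x y w) (csqrt (q x x) * csqrt (q y y) * csqrt (q w w))"
proof -
  define a where "a = csqrt (q x x)"
  define b where "b = csqrt (q y y)"
  define c where "c = csqrt (q w w)"
  have sq: "a\<^sup>2 = q x x" "b\<^sup>2 = q y y" "c\<^sup>2 = q w w" and nz: "a \<noteq> 0" "b \<noteq> 0" "c \<noteq> 0"
    using assms(2-4) by (simp_all add: a_def b_def c_def)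
  have eqs: "contract23 t y w = (b\<^sup>2 * c\<^sup>2) *s x" "contract13 t x w = (a\<^sup>2 * c\<^sup>2) *s y"
    "contract12 t x y = (a\<^sup>2 * b\<^sup>2) *s w"
    using crit by (simp_all add: crit_eqs_def sq)
  have "singular_value t (tp x y w) (a * b * c)"
    unfolding singular_value_def
  proof (intro exI conjI allI)
    show "q ((1/a) *s x) ((1/a) *s x) = 1" "q ((1/b) *s y) ((1/b) *s y) = 1"
      "q ((1/c) *s w) ((1/c) *s w) = 1"
      using nz by (simp_all add: flip: sq) (simp_all add: power2_eq_square)
    show "tp x y w = tp ((a * b * c) *s ((1/a) *s x)) ((1/b) *s y) ((1/c) *s w)"
      using nz by (simp add: tens_eq_iff)
    fix v
    show "qt t (tp v ((1/b) *s y) ((1/c) *s w)) = a * b * c * q ((1/a) *s x) v"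
      using nz by (simp add: qt_tp_contract(1) eqs q_commute power2_eq_square field_simps)
    show "qt t (tp ((1/a) *s x) v ((1/c) *s w)) = a * b * c * q ((1/b) *s y) v"
      using nz by (simp add: qt_tp_contract(2) eqs q_commute power2_eq_square field_simps)
    show "qt t (tp ((1/a) *s x) ((1/b) *s y) v) = a * b * c * q ((1/c) *s w) v"
      using nz by (simp add: qt_tp_contract(3) eqs q_commute power2_eq_square field_simps)
  qed
  then show ?thesis by (simp add: a_def b_def c_def)
qed

lemma real_if_square_nonneg:
  fixes s :: complex
  assumes "s\<^sup>2 = of_real r" "r \<ge> 0"
  shows "s \<in> \<real>"
proof -
  have "Im (s\<^sup>2) = 0" "Re (s\<^sup>2) = r" using assms(1) by simp_all
  then have "2 * Re s * Im s = 0" "(Re s)\<^sup>2 - (Im s)\<^sup>2 \<ge> 0"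
    using assms(2) by (simp_all add: Im_power2 Re_power2)
  then have "Im s = 0"
    by (cases "Re s = 0") auto
  then show ?thesis by (simp add: complex_is_Real_iff)
qed

lemma neg_det_div_real_tensor:
  assumes S: "t \<in> S21" and R: "real_tensor t"
  shows "\<exists>r\<ge>0. - det (traceless_pencil t) / q (trace_vec t) (trace_vec t) = of_real r"
proof -
  let ?M = "traceless_pencil t" and ?\<tau> = "trace_vec t"
  have "t$i$j$k \<in> \<real>" for i j k
    using R by (simp add: real_tensor_def complex_is_Real_iff)
  then have "?M$1$1 \<in> \<real>" "?M$1$2 \<in> \<real>" "?\<tau>$1 \<in> \<real>" "?\<tau>$2 \<in> \<real>"
    by (simp_all add: traceless_pencil_def traceless_dir_def perp_def pencil_nth trace_vec_def sum_2)
  then obtain a b c d where "?M$1$1 = of_real a" "?M$1$2 = of_real b" "?\<tau>$1 = of_real c" "?\<tau>$2 = of_real d"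
    by (metis Reals_cases)
  then have "- det ?M / q ?\<tau> ?\<tau> = of_real ((a\<^sup>2 + b\<^sup>2) / (c\<^sup>2 + d\<^sup>2))"
    by (simp add: neg_det_traceless_sym trace_traceless_pencil traceless_pencil_sym[OF S] q_2
        power2_eq_square)
  then show ?thesis by (intro exI[of _ "(a\<^sup>2 + b\<^sup>2) / (c\<^sup>2 + d\<^sup>2)"]) simp
qed

lemma singular_value_indep_real:
  assumes S: "t \<in> S21" and D: "det (traceless_pencil t) \<noteq> 0"
    and rho: "q (trace_vec t) (trace_vec t) \<noteq> 0" and R: "real_tensor t"
    and crit: "crit_eqs t x y w" "det2 x y \<noteq> 0" "w \<noteq> 0"
  shows "csqrt (q x x) * csqrt (q y y) * csqrt (q w w) \<in> \<real>"
proof -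
  obtain r where r: "r \<ge> 0" "- det (traceless_pencil t) / q (trace_vec t) (trace_vec t) = of_real r"
    using neg_det_div_real_tensor[OF S R] by blast
  have "(csqrt (q x x) * csqrt (q y y) * csqrt (q w w))\<^sup>2 = q x x * q y y * q w w"
    by (simp add: power_mult_distrib)
  also have "\<dots> = of_real r"
    using crit_eqs_indep_norms[OF S crit D rho] rho r(2) by (simp add: field_simps)
  finally show ?thesis using r(1) by (rule real_if_square_nonneg)
qed

section \<open>General partially symmetric tensors\<close>

definition generic21 :: "tens \<Rightarrow> bool" where
  "generic21 t \<longleftrightarrow>
     det (traceless_pencil t) \<noteq> 0 \<and> q (trace_vec t) (trace_vec t) \<noteq> 0 \<and>
     quad_res (pair_matrix t) (mat 1) \<noteq> 0 \<and>
     quad_res (pair_matrix t) (rot90 ** traceless_pencil t) \<noteq> 0 \<and>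
     quad_res (slice t 1) (slice t 2) \<noteq> 0 \<and>
     coeff (x21_quartic t) 4 \<noteq> 0 \<and>
     poly (x21_quartic t) \<i> * poly (x21_quartic t) (- \<i>) \<noteq> 0 \<and>
     quartic_disc (coeff (x21_quartic t) 4) (coeff (x21_quartic t) 3)
       (coeff (x21_quartic t) 2) (coeff (x21_quartic t) 1) (coeff (x21_quartic t) 0) \<noteq> 0"

lemma traceless_dir_neq_0:
  assumes "q (trace_vec t) (trace_vec t) \<noteq> 0"
  shows "traceless_dir t \<noteq> 0"
proof
  assume "traceless_dir t = 0"
  then show False using assms q_traceless_dir[of t] by (simp add: q_2)
qed

lemma crit_X3_S21_generic:
  assumes S: "t \<in> S21" and G: "generic21 t"
  obtains x y where "det2 x y \<noteq> 0" "crit_eqs t x y (traceless_dir t)"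
    "{z. crit X3 tan3 t z} = {z. crit X21 tan21 t z} \<union> {tp x y (traceless_dir t), tp y x (traceless_dir t)}"
proof -
  have D: "det (traceless_pencil t) \<noteq> 0" and rho: "q (trace_vec t) (trace_vec t) \<noteq> 0"
    and iso: "quad_res (pair_matrix t) (mat 1) \<noteq> 0"
    and eig: "quad_res (pair_matrix t) (rot90 ** traceless_pencil t) \<noteq> 0"
    using G by (simp_all add: generic21_def)
  obtain x y where indep: "det2 x y \<noteq> 0" and crit: "crit_eqs t x y (traceless_dir t)"
    using crit_eqs_pair_exists[OF S rho iso eig] by blast
  with crit_X3_S21_eq[OF S D rho iso crit indep traceless_dir_neq_0[OF rho]] that show ?thesis
    by blast
qed

lemma card_crit_X21_generic: "t \<in> S21 \<Longrightarrow> generic21 t \<Longrightarrow> card {z. crit X21 tan21 t z} = 4"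
  by (rule card_crit_X21) (simp_all add: generic21_def)

lemma singular_value_indep_generic:
  assumes S: "t \<in> S21" and G: "generic21 t"
    and crit: "crit_eqs t x y w" "det2 x y \<noteq> 0" "w \<noteq> 0"
  shows "singular_value t (tp x y w) (csqrt (q x x) * csqrt (q y y) * csqrt (q w w))"
    and "real_tensor t \<Longrightarrow> csqrt (q x x) * csqrt (q y y) * csqrt (q w w) \<in> \<real>"
proof -
  have D: "det (traceless_pencil t) \<noteq> 0" and rho: "q (trace_vec t) (trace_vec t) \<noteq> 0"
    using G by (simp_all add: generic21_def)
  obtain k where "q x x \<noteq> 0" "q y y \<noteq> 0" "q w w \<noteq> 0"
    using crit_eqs_indep_shape[OF S crit D rho] .
  then show "singular_value t (tp x y w) (csqrt (q x x) * csqrt (q y y) * csqrt (q w w))"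
    by (rule singular_value_crit_eqs[OF crit(1)])
  show "real_tensor t \<Longrightarrow> csqrt (q x x) * csqrt (q y y) * csqrt (q w w) \<in> \<real>"
    using singular_value_indep_real[OF S D rho _ crit] .
qed

lemma crit_points_S21:
  assumes S: "t \<in> S21" and G: "generic21 t"
  shows "card {z. crit X21 tan21 t z} = 4 \<and>
           (\<exists>x y w.
              {z. crit X3 tan3 t z} = {z. crit X21 tan21 t z} \<union> {tp x y w, tp y x w} \<and>
              tp x y w \<noteq> tp y x w \<and> tp x y w \<notin> X21 \<and> tp y x w \<notin> X21 \<and>
              (real_tensor t \<longrightarrow>
                 (\<exists>\<sigma>\<in>\<real>. singular_value t (tp x y w) \<sigma> \<and> singular_value t (tp y x w) \<sigma>)))"
proof -
  obtain x y where indep: "det2 x y \<noteq> 0" and crit: "crit_eqs t x y (traceless_dir t)"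
    and set: "{z. crit X3 tan3 t z} = {z. crit X21 tan21 t z} \<union> {tp x y (traceless_dir t), tp y x (traceless_dir t)}"
    using crit_X3_S21_generic[OF S G] .
  let ?w = "traceless_dir t"
  have w: "?w \<noteq> 0" using G traceless_dir_neq_0 by (simp add: generic21_def)
  have indep': "det2 y x \<noteq> 0" using indep det2_commute[of y x] by simp
  note sv = singular_value_indep_generic[OF S G crit indep w]
    singular_value_indep_generic[OF S G crit_eqs_swap12[OF S crit] indep' w]
  have "real_tensor t \<longrightarrow> (\<exists>\<sigma>\<in>\<real>. singular_value t (tp x y ?w) \<sigma> \<and> singular_value t (tp y x ?w) \<sigma>)"
    using sv by (metis mult.commute)
  then show ?thesis
    using card_crit_X21_generic[OF S G] set tp_swap12_neq[OF indep w] tp_notin_X21[OF indep w]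
      tp_notin_X21[OF indep' w] by blast
qed

section \<open>General symmetric tensors\<close>

lemma Xsym3_subset_X21: "Xsym3 \<subseteq> X21"
  unfolding Xsym3_def X21_def by blast

lemma tp_smult_diag_in_Xsym3: "tp u u (l *s u) \<in> Xsym3"
proof -
  obtain r where "r^3 = l" using exists_complex_root[of 3 l] by auto
  then have "tp u u (l *s u) = tp (r *s u) (r *s u) (r *s u)"
    by (simp add: tens_eq_iff power3_eq_cube mult_ac)
  then show ?thesis unfolding Xsym3_def by blast
qed

lemma tp_notin_Xsym3:
  assumes "det2 x y \<noteq> 0"
  shows "tp x x y \<notin> Xsym3"
proof
  assume "tp x x y \<in> Xsym3"
  then obtain u where e: "tp x x y = tp u u u" by (auto simp: Xsym3_def)
  have "x$1 * x$1 * y$2 = x$2 * x$1 * y$1" "x$1 * x$2 * y$2 = x$2 * x$2 * y$1"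
    using arg_cong[OF e, of "\<lambda>z. z$1$1$2"] arg_cong[OF e, of "\<lambda>z. z$2$1$1"]
      arg_cong[OF e, of "\<lambda>z. z$1$2$2"] arg_cong[OF e, of "\<lambda>z. z$2$2$1"] by (simp_all add: mult_ac)
  then have "x$1 * det2 x y = 0" "x$2 * det2 x y = 0" by (simp_all add: det2_def algebra_simps)
  then show False using assms det2_neq_0_imp_neq_0[OF assms] by (simp add: vec2_eq_0_iff)
qed

lemma crit_pair_S3_shape:
  assumes S: "t \<in> S3"
    and set: "{z. crit X3 tan3 t z} = {z. crit X21 tan21 t z} \<union> {tp x0 y0 w0, tp y0 x0 w0}"
    and crit: "crit_eqs t x0 y0 w0" "det2 x0 y0 \<noteq> 0" "w0 \<noteq> 0"
  obtains x y where "det2 x y \<noteq> 0" "{tp x0 y0 w0, tp y0 x0 w0} = {tp x y x, tp y x x}"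
proof (cases "det2 w0 x0 = 0")
  case True
  have "x0 \<noteq> 0" "y0 \<noteq> 0" using det2_neq_0_imp_neq_0[OF crit(2)] by auto
  then obtain l where l: "w0 = l *s x0" using det2_eq_0_imp_smult[OF True] by blast
  then have "l \<noteq> 0" using crit(3) by auto
  then have "det2 x0 (l *s y0) \<noteq> 0" using crit(2) by simp
  moreover have "{tp x0 y0 w0, tp y0 x0 w0} = {tp x0 (l *s y0) x0, tp (l *s y0) x0 x0}"
    by (simp add: l tp_smult_to_first)
  ultimately show ?thesis using that by blast
next
  case False
  have "x0 \<noteq> 0" "y0 \<noteq> 0" using det2_neq_0_imp_neq_0[OF crit(2)] by auto
  have "crit X3 tan3 t (tp x0 w0 y0)"
    using crit_eqs_swap23[OF S crit(1)] \<open>x0 \<noteq> 0\<close> \<open>y0 \<noteq> 0\<close> crit(3)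
    by (simp add: crit_X3_tp_iff tp_eq_0_iff)
  moreover have "tp x0 w0 y0 \<notin> X21"
    using tp_notin_X21[OF _ \<open>y0 \<noteq> 0\<close>] False det2_commute[of w0 x0] by auto
  ultimately have "tp x0 w0 y0 = tp x0 y0 w0 \<or> tp x0 w0 y0 = tp y0 x0 w0"
    using set crit_X21_iff[OF set_mp[OF S3_subset_S21 S]] by blast
  then show ?thesis
  proof
    assume e: "tp x0 w0 y0 = tp x0 y0 w0"
    have "tp x0 y0 w0 \<noteq> 0" using \<open>x0 \<noteq> 0\<close> \<open>y0 \<noteq> 0\<close> crit(3) by (simp add: tp_eq_0_iff)
    then obtain l m n where m: "w0 = m *s y0" using tp_eq_tp_imp_smult[OF e] by blast
    then have "m \<noteq> 0" using crit(3) by auto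
    then have "det2 y0 (m *s x0) \<noteq> 0" using crit(2) det2_commute[of y0 x0] by simp
    moreover have "{tp x0 y0 w0, tp y0 x0 w0} = {tp y0 (m *s x0) y0, tp (m *s x0) y0 y0}"
      by (auto simp: m tens_eq_iff mult_ac)
    ultimately show ?thesis using that by blast
  next
    assume e: "tp x0 w0 y0 = tp y0 x0 w0"
    have "tp y0 x0 w0 \<noteq> 0" using \<open>x0 \<noteq> 0\<close> \<open>y0 \<noteq> 0\<close> crit(3) by (simp add: tp_eq_0_iff)
    then obtain l m n where "x0 = l *s y0" using tp_eq_tp_imp_smult[OF e] by blast
    then have "det2 x0 y0 = 0" by (simp add: det2_def)
    with crit(2) show ?thesis ..
  qed
qed

lemma crit_X21_S3_not_sym:
  assumes S: "t \<in> S3"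
    and set: "{z. crit X3 tan3 t z} = {z. crit X21 tan21 t z} \<union> {tp x y x, tp y x x}"
    and indep: "det2 x y \<noteq> 0" and crit: "crit_eqs t x x y" and "q x x \<noteq> 0"
    and z: "crit X21 tan21 t z" "z \<notin> Xsym3"
  shows "z = tp x x y"
proof -
  have S21: "t \<in> S21" using S S3_subset_S21 by blast
  have "x \<noteq> 0" "y \<noteq> 0" using det2_neq_0_imp_neq_0[OF indep] by auto
  obtain u v where zuv: "z = tp u u v" and cz: "crit X3 tan3 t (tp u u v)"
    using z(1) crit_X21_iff[OF S21] by (auto simp: X21_def)
  then have "u \<noteq> 0" "v \<noteq> 0" by (simp_all add: crit_X3_tp_iff tp_eq_0_iff)
  have "det2 v u \<noteq> 0"
  proof
    assume "det2 v u = 0"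
    then obtain l where "v = l *s u" using det2_eq_0_imp_smult \<open>u \<noteq> 0\<close> by blast
    then show False using z(2) tp_smult_diag_in_Xsym3 zuv by blast
  qed
  then have indep_uv: "det2 u v \<noteq> 0" using det2_commute[of v u] by simp
  have "crit X3 tan3 t (tp u v u)"
    using cz crit_eqs_swap23[OF S] \<open>u \<noteq> 0\<close> \<open>v \<noteq> 0\<close> by (simp add: crit_X3_tp_iff tp_eq_0_iff)
  moreover have "tp u v u \<notin> X21" using tp_notin_X21[OF indep_uv \<open>u \<noteq> 0\<close>] .
  ultimately have "tp u v u = tp x y x \<or> tp u v u = tp y x x"
    using set crit_X21_iff[OF S21] by blast
  then show ?thesis
  proof
    assume e: "tp u v u = tp x y x"
    have "tp x y x \<noteq> 0" using \<open>x \<noteq> 0\<close> \<open>y \<noteq> 0\<close> by (simp add: tp_eq_0_iff)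
    then obtain l m n where lm: "u = l *s x" "v = m *s y" using tp_eq_tp_imp_smult[OF e] by blast
    then have z': "z = tp ((l * l * m) *s x) x y" by (simp add: zuv tens_eq_iff mult_ac)
    then have "crit_eqs t ((l * l * m) *s x) x y" "l * l * m \<noteq> 0"
      using cz zuv by (simp_all add: crit_X3_tp_iff tp_eq_0_iff)
    then have "l * l * m = 1"
      using crit_eqs_smult_eq_1[OF crit] \<open>q x x \<noteq> 0\<close> \<open>y \<noteq> 0\<close> by blast
    then show ?thesis using z' by simp
  next
    assume e: "tp u v u = tp y x x"
    have "tp y x x \<noteq> 0" using \<open>x \<noteq> 0\<close> \<open>y \<noteq> 0\<close> by (simp add: tp_eq_0_iff)
    then obtain l m n where u: "u = l *s y" "u = n *s x" using tp_eq_tp_imp_smult[OF e] by blast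
    then have "l \<noteq> 0" using \<open>u \<noteq> 0\<close> by auto
    have "l * det2 x y = det2 x u" by (simp add: u(1))
    also have "\<dots> = 0" by (simp add: u(2) det2_def)
    finally show ?thesis using \<open>l \<noteq> 0\<close> indep by simp
  qed
qed

lemma crit_X3_S3_generic:
  assumes S: "t \<in> S3" and G: "generic21 t"
  obtains x y where "det2 x y \<noteq> 0"
    "{z. crit X3 tan3 t z} = {z. crit X21 tan21 t z} \<union> {tp x y x, tp y x x}"
proof -
  have w0: "traceless_dir t \<noteq> 0" using G traceless_dir_neq_0 by (simp add: generic21_def)
  obtain x0 y0 where indep0: "det2 x0 y0 \<noteq> 0" and crit0: "crit_eqs t x0 y0 (traceless_dir t)"
    and set0: "{z. crit X3 tan3 t z} = {z. crit X21 tan21 t z} \<union> {tp x0 y0 (traceless_dir t), tp y0 x0 (traceless_dir t)}"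
    using crit_X3_S21_generic[OF set_mp[OF S3_subset_S21 S] G] .
  obtain x y where indep: "det2 x y \<noteq> 0"
    and pair: "{tp x0 y0 (traceless_dir t), tp y0 x0 (traceless_dir t)} = {tp x y x, tp y x x}"
    using crit_pair_S3_shape[OF S set0 crit0 indep0 w0] .
  from set0 have "{z. crit X3 tan3 t z} = {z. crit X21 tan21 t z} \<union> {tp x y x, tp y x x}"
    by (simp only: pair)
  with indep that show ?thesis by blast
qed

lemma crit_Xsym3_S3_eq:
  assumes S: "t \<in> S3"
    and set: "{z. crit X3 tan3 t z} = {z. crit X21 tan21 t z} \<union> {tp x y x, tp y x x}"
    and indep: "det2 x y \<noteq> 0" and crit: "crit_eqs t x x y" and "q x x \<noteq> 0"
  shows "crit X21 tan21 t (tp x x y)"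
    and "{z. crit Xsym3 tansym3 t z} = {z. crit X21 tan21 t z} - {tp x x y}"
proof -
  have S21: "t \<in> S21" using S S3_subset_S21 by blast
  have "x \<noteq> 0" "y \<noteq> 0" using det2_neq_0_imp_neq_0[OF indep] by auto
  then have "crit X3 tan3 t (tp x x y)"
    using crit by (simp add: crit_X3_tp_iff tp_eq_0_iff)
  moreover have "tp x x y \<in> X21" unfolding X21_def by blast
  ultimately show "crit X21 tan21 t (tp x x y)" using crit_X21_iff[OF S21] by blast
  have "crit Xsym3 tansym3 t z \<longleftrightarrow> crit X21 tan21 t z \<and> z \<noteq> tp x x y" for z
  proof
    assume "crit Xsym3 tansym3 t z"
    then have "crit X3 tan3 t z" "z \<in> Xsym3" using crit_Xsym3_iff[OF S] by simp_all
    then show "crit X21 tan21 t z \<and> z \<noteq> tp x x y"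
      using crit_X21_iff[OF S21] Xsym3_subset_X21 tp_notin_Xsym3[OF indep] by blast
  next
    assume z: "crit X21 tan21 t z \<and> z \<noteq> tp x x y"
    then have "z \<in> Xsym3"
      using crit_X21_S3_not_sym[OF S set indep crit \<open>q x x \<noteq> 0\<close>] by blast
    then show "crit Xsym3 tansym3 t z"
      using z crit_X21_iff[OF S21] crit_Xsym3_iff[OF S] by blast
  qed
  then show "{z. crit Xsym3 tansym3 t z} = {z. crit X21 tan21 t z} - {tp x x y}"
    by blast
qed

lemma crit_points_S3:
  assumes S: "t \<in> S3" and G: "generic21 t"
  shows "card {z. crit Xsym3 tansym3 t z} = 3 \<and>
           (\<exists>x y.
              {z. crit X3 tan3 t z} = {z. crit Xsym3 tansym3 t z} \<union> {tp x x y, tp x y x, tp y x x} \<and>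
              tp x x y \<noteq> tp x y x \<and> tp x x y \<noteq> tp y x x \<and> tp x y x \<noteq> tp y x x \<and>
              tp x x y \<notin> Xsym3 \<and> tp x y x \<notin> Xsym3 \<and> tp y x x \<notin> Xsym3 \<and>
              (real_tensor t \<longrightarrow>
                 (\<exists>\<sigma>\<in>\<real>. singular_value t (tp x x y) \<sigma> \<and> singular_value t (tp x y x) \<sigma>
                         \<and> singular_value t (tp y x x) \<sigma>)))"
proof -
  have S21: "t \<in> S21" using S S3_subset_S21 by blast
  obtain x y where indep: "det2 x y \<noteq> 0"
    and set: "{z. crit X3 tan3 t z} = {z. crit X21 tan21 t z} \<union> {tp x y x, tp y x x}"
    using crit_X3_S3_generic[OF S G] .
  have "x \<noteq> 0" using det2_neq_0_imp_neq_0[OF indep] by auto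
  have indep': "det2 y x \<noteq> 0" using indep det2_commute[of y x] by simp
  have "crit X3 tan3 t (tp x y x)" using set by blast
  then have crit_xyx: "crit_eqs t x y x" by (simp add: crit_X3_tp_iff)
  have crit_yxx: "crit_eqs t y x x" and crit_xxy: "crit_eqs t x x y"
    using crit_eqs_swap12[OF S21 crit_xyx] crit_eqs_swap23[OF S crit_xyx] by simp_all
  have D: "det (traceless_pencil t) \<noteq> 0" and rho: "q (trace_vec t) (trace_vec t) \<noteq> 0"
    using G by (simp_all add: generic21_def)
  obtain k where "q x x \<noteq> 0" "q y y \<noteq> 0"
    using crit_eqs_indep_shape[OF S21 crit_xyx indep \<open>x \<noteq> 0\<close> D rho] .
  note sym = crit_Xsym3_S3_eq[OF S set indep crit_xxy \<open>q x x \<noteq> 0\<close>]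
  have card: "card {z. crit Xsym3 tansym3 t z} = 3"
    unfolding sym(2) using card_crit_X21_generic[OF S21 G] sym(1)
    by (simp add: card_Diff_singleton_if card.infinite)
  have "{z. crit X21 tan21 t z} = insert (tp x x y) {z. crit Xsym3 tansym3 t z}"
    unfolding sym(2) using sym(1) by (simp add: insert_Diff insert_absorb)
  then have set3: "{z. crit X3 tan3 t z} = {z. crit Xsym3 tansym3 t z} \<union> {tp x x y, tp x y x, tp y x x}"
    unfolding set by auto
  have not_X21: "tp x y x \<notin> X21" "tp y x x \<notin> X21"
    using tp_notin_X21[OF indep \<open>x \<noteq> 0\<close>] tp_notin_X21[OF indep' \<open>x \<noteq> 0\<close>] .
  have "tp x x y \<in> X21" unfolding X21_def by blast
  with not_X21 have distinct: "tp x x y \<noteq> tp x y x" "tp x x y \<noteq> tp y x x"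
    by auto
  have not_sym: "tp x y x \<notin> Xsym3" "tp y x x \<notin> Xsym3"
    using not_X21 Xsym3_subset_X21 by auto
  let ?\<sigma> = "csqrt (q x x) * csqrt (q y y) * csqrt (q x x)"
  have "singular_value t (tp x x y) ?\<sigma>"
    using singular_value_crit_eqs[OF crit_xxy \<open>q x x \<noteq> 0\<close> \<open>q x x \<noteq> 0\<close> \<open>q y y \<noteq> 0\<close>]
    by (simp add: mult_ac)
  moreover have "singular_value t (tp y x x) ?\<sigma>"
    using singular_value_indep_generic(1)[OF S21 G crit_yxx indep' \<open>x \<noteq> 0\<close>] by (simp add: mult_ac)
  moreover note singular_value_indep_generic[OF S21 G crit_xyx indep \<open>x \<noteq> 0\<close>]
  ultimately have "real_tensor t \<longrightarrow> (\<exists>\<sigma>\<in>\<real>. singular_value t (tp x x y) \<sigma> \<and>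
      singular_value t (tp x y x) \<sigma> \<and> singular_value t (tp y x x) \<sigma>)"
    by blast
  then show ?thesis
    using card set3 distinct tp_swap12_neq[OF indep \<open>x \<noteq> 0\<close>] tp_notin_Xsym3[OF indep] not_sym
    by blast
qed

section \<open>Genericity is a polynomial condition\<close>

definition generic_poly :: "tens \<Rightarrow> complex" where
  "generic_poly t =
     det (traceless_pencil t) * q (trace_vec t) (trace_vec t) *
     quad_res (pair_matrix t) (mat 1) * quad_res (pair_matrix t) (rot90 ** traceless_pencil t) *
     quad_res (slice t 1) (slice t 2) * coeff (x21_quartic t) 4 *
     (poly (x21_quartic t) \<i> * poly (x21_quartic t) (- \<i>)) *
     quartic_disc (coeff (x21_quartic t) 4) (coeff (x21_quartic t) 3)
       (coeff (x21_quartic t) 2) (coeff (x21_quartic t) 1) (coeff (x21_quartic t) 0)"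

lemma generic_poly_neq_0_iff: "generic_poly t \<noteq> 0 \<longleftrightarrow> generic21 t"
  by (simp add: generic_poly_def generic21_def)

lemma poly_fun_diff: "poly_fun p \<Longrightarrow> poly_fun r \<Longrightarrow> poly_fun (\<lambda>t. p t - r t)"
  using pf_add[OF _ pf_mult[OF pf_const[of "-1"]], of p r] by simp

lemma poly_fun_uminus: "poly_fun p \<Longrightarrow> poly_fun (\<lambda>t. - p t)"
  using pf_mult[OF pf_const[of "-1"], of p] by simp

lemma poly_fun_power: "poly_fun p \<Longrightarrow> poly_fun (\<lambda>t. p t ^ n)"
proof (induction n)
  case 0
  then show ?case using pf_const[of 1] by simp
next
  case (Suc n)
  then show ?case using pf_mult[of p "\<lambda>t. p t ^ n"] by simp
qed

lemmas poly_fun_intros = pf_const pf_coord pf_add pf_mult poly_fun_diff poly_fun_uminus poly_fun_power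

lemma poly_fun_generic_poly: "poly_fun generic_poly"
  unfolding generic_poly_def[abs_def]
  by (simp add: det_2 mat2_mult_nth mat_1_2 pencil_nth traceless_pencil_def traceless_dir_def
      perp_def trace_vec_def sum_2 q_2 pair_matrix_def rot90_def slice_def quad_res_def Let_def
      x21_quartic_def quartic_disc_def eval_nat_numeral)
    (intro poly_fun_intros)

definition t0 :: tens where
  "t0 = (\<chi> i j k. if i = 1 \<and> j = 1 \<and> k = 1 then -2 else -1)"

lemma t0_in_S3: "t0 \<in> S3"
  by (simp add: S3_def t0_def)

lemma generic21_t0: "generic21 t0"
proof -
  have t0: "t0$1$1$1 = -2" "t0$1$1$2 = -1" "t0$1$2$1 = -1" "t0$1$2$2 = -1"
    "t0$2$1$1 = -1" "t0$2$1$2 = -1" "t0$2$2$1 = -1" "t0$2$2$2 = -1"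
    by (simp_all add: t0_def)
  have \<tau>: "trace_vec t0 = vector [-3, -2]"
    by (simp add: trace_vec_def sum_2 t0 vec2_eq_iff)
  have M: "traceless_pencil t0 = vector [vector [1, -1], vector [-1, -1]]"
    by (simp add: traceless_pencil_def traceless_dir_def perp_def \<tau> pencil_nth t0 mat2_eq_iff)
  have N: "pencil t0 (vector [-3, -2]) = vector [vector [8, 5], vector [5, 5]]"
    by (simp add: pencil_nth t0 mat2_eq_iff)
  have S: "slice t0 1 = vector [vector [-2, -1], vector [-1, -1]]"
    "slice t0 2 = vector [vector [-1, -1], vector [-1, -1]]"
    by (simp_all add: slice_def t0 mat2_eq_iff)
  have F: "x21_quartic t0 = [:3, 2, -3, -5, -2:]"
    by (simp add: x21_quartic_def t0)
  show ?thesis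
    by (simp add: generic21_def \<tau> M N S F q_2 det_2 pair_matrix_def mat2_mult_nth rot90_def mat_1_2
        quad_res_def Let_def quartic_disc_def eval_nat_numeral complex_eq_iff)
qed

theorem proposition6p1:
  shows "general S21 (\<lambda>t.
           card {z. crit X21 tan21 t z} = 4 \<and>
           (\<exists>x y w.
              {z. crit X3 tan3 t z} = {z. crit X21 tan21 t z} \<union> {tp x y w, tp y x w} \<and>
              tp x y w \<noteq> tp y x w \<and> tp x y w \<notin> X21 \<and> tp y x w \<notin> X21 \<and>
              (real_tensor t \<longrightarrow>
                 (\<exists>\<sigma>\<in>\<real>. singular_value t (tp x y w) \<sigma> \<and> singular_value t (tp y x w) \<sigma>))))
       \<and> general S3 (\<lambda>t.
           card {z. crit Xsym3 tansym3 t z} = 3 \<and>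
           (\<exists>x y.
              {z. crit X3 tan3 t z} = {z. crit Xsym3 tansym3 t z} \<union> {tp x x y, tp x y x, tp y x x} \<and>
              tp x x y \<noteq> tp x y x \<and> tp x x y \<noteq> tp y x x \<and> tp x y x \<noteq> tp y x x \<and>
              tp x x y \<notin> Xsym3 \<and> tp x y x \<notin> Xsym3 \<and> tp y x x \<notin> Xsym3 \<and>
              (real_tensor t \<longrightarrow>
                 (\<exists>\<sigma>\<in>\<real>. singular_value t (tp x x y) \<sigma> \<and> singular_value t (tp x y x) \<sigma>
                         \<and> singular_value t (tp y x x) \<sigma>))))"
proof -
  have witness: "t0 \<in> S3" "generic_poly t0 \<noteq> 0"
    using t0_in_S3 generic21_t0 by (simp_all add: generic_poly_neq_0_iff)
  show ?thesis
    unfolding general_def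
  proof (intro conjI exI[of _ generic_poly])
    show "\<exists>t\<in>S21. generic_poly t \<noteq> 0" "\<exists>t\<in>S3. generic_poly t \<noteq> 0"
      using witness S3_subset_S21 by blast+
  qed (use poly_fun_generic_poly crit_points_S21 crit_points_S3 generic_poly_neq_0_iff in blast)+
qed

end
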